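(* For every $\alpha \in (0,\tfrac{1}{2})$ there is a (deterministic, non-clairvoyant) online algorithm for dynamic bin packing that makes at most $\frac{4\alpha}{1-2\alpha}\cdot n$ migrations in total on every instance with $n$ items, and such that at every time $t$ the number of bins it has open is at most $\frac{1}{\alpha}\mathrm{OPT}_t + O(\log \rho)$, where $\rho$ is the maximum number of items simultaneously present in the system at any time (the $O(\cdot)$ hides an absolute constant).
   Context: Dynamic bin packing: bins have capacity $1$. Items $i=1,\dots,n$ arrive online at arrival times $a_i\ge 0$, with size $s_i\in[0,1]$ and duration $d_i>0$; item $i$ is present in the system during $[a_i,a_i+d_i)$. The algorithm is non-clairvoyant: at arrival only $s_i$ is revealed, not $d_i$. Upon arrival the algorithm must place the item into an open bin whose current load (total size of the items it contains) plus $s_i$ is at most $1$, or open a new bin for it. A migration moves an already placed item from its bin to another bin (respecting capacity); the number of migrations is the total number of such moves. A bin is open while it contains at least one item. $\mathrm{OPT}_t$ denotes the minimum number of unit-capacity bins needed to pack the items present in the system at time $t$. *)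

theory Defs
  imports Complex_Main "HOL-Library.Product_Lexorder"
begin

type_synonym item = "real \<times> real \<times> real"

definition arr :: "item \<Rightarrow> real" where "arr x = fst x"
definition isize :: "item \<Rightarrow> real" where "isize x = fst (snd x)"
definition dur :: "item \<Rightarrow> real" where "dur x = snd (snd x)"

definition well_formed :: "item list \<Rightarrow> bool" where
  "well_formed I \<longleftrightarrow> (\<forall>x\<in>set I. 0 \<le> arr x \<and> 0 \<le> isize x \<and> isize x \<le> 1 \<and> 0 < dur x)"

definition present_at :: "item list \<Rightarrow> real \<Rightarrow> nat set" where
  "present_at I t = {i. i < length I \<and> arr (I!i) \<le> t \<and> t < arr (I!i) + dur (I!i)}"

definition feasible :: "item list \<Rightarrow> nat set \<Rightarrow> (nat \<Rightarrow> nat) \<Rightarrow> bool" where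
  "feasible I P c \<longleftrightarrow> (\<forall>b. (\<Sum>i\<in>{i\<in>P. c i = b}. isize (I!i)) \<le> 1)"

definition opt :: "item list \<Rightarrow> nat set \<Rightarrow> nat" where
  "opt I P = (LEAST k. \<exists>c::nat \<Rightarrow> nat. (\<forall>i\<in>P. c i < k) \<and> feasible I P c)"

definition rho :: "item list \<Rightarrow> nat" where
  "rho I = Max (range (\<lambda>t. card (present_at I t)))"

text \<open>Events as seen by a non-clairvoyant algorithm: "Arr t i s" (item i of size s
  arrives at time t) and "Dep t i" (item i departs at time t). Durations are never revealed.\<close>
datatype event = Arr real nat real | Dep real nat

fun ev_time :: "event \<Rightarrow> real" where
  "ev_time (Arr t _ _) = t"
| "ev_time (Dep t _) = t"

text \<open>Event sequence of an instance: sorted by time; at equal times departures before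
  arrivals (an item is absent at its departure time); remaining ties by item index.\<close>
definition events :: "item list \<Rightarrow> event list" where
  "events I = map snd (sort_key fst
     ([((arr (I!i) + dur (I!i), 0::nat, i), Dep (arr (I!i) + dur (I!i)) i). i \<leftarrow> [0..<length I]] @
      [((arr (I!i), 1::nat, i), Arr (arr (I!i)) i (isize (I!i))). i \<leftarrow> [0..<length I]]))"

definition present :: "event list \<Rightarrow> nat set" where
  "present h = {i. (\<exists>t s. Arr t i s \<in> set h) \<and> (\<forall>t. Dep t i \<notin> set h)}"

text \<open>A deterministic online algorithm maps the history of events observed so far to its
  response to the last event: a nonempty list of successive configurations (bin labels of
  items). The first configuration is the packing right after the event (placing an arriving
  item); each subsequent one performs one migration. The final one is the state after the event.\<close>
type_synonym algorithm = "event list \<Rightarrow> (nat \<Rightarrow> nat) list"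

definition trace :: "algorithm \<Rightarrow> item list \<Rightarrow> (nat \<times> (nat \<Rightarrow> nat)) list" where
  "trace A I = concat (map (\<lambda>k. map (\<lambda>c. (k, c)) (A (take k (events I))))
                           [1..<Suc (length (events I))])"

definition moved :: "item list \<Rightarrow> nat \<times> (nat \<Rightarrow> nat) \<Rightarrow> nat \<times> (nat \<Rightarrow> nat) \<Rightarrow> nat set" where
  "moved I x y = {i \<in> present (take (fst x) (events I)) \<inter> present (take (fst y) (events I)).
                    snd x i \<noteq> snd y i}"

definition valid_run :: "algorithm \<Rightarrow> item list \<Rightarrow> bool" where
  "valid_run A I \<longleftrightarrow>
     (\<forall>k\<in>{1..length (events I)}. A (take k (events I)) \<noteq> []) \<and>
     (\<forall>x\<in>set (trace A I). feasible I (present (take (fst x) (events I))) (snd x)) \<and>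
     (\<forall>j. Suc j < length (trace A I) \<longrightarrow>
        (if fst (trace A I ! j) = fst (trace A I ! Suc j)
         then card (moved I (trace A I ! j) (trace A I ! Suc j)) \<le> 1
         else moved I (trace A I ! j) (trace A I ! Suc j) = {}))"

definition migrations :: "algorithm \<Rightarrow> item list \<Rightarrow> nat" where
  "migrations A I = (\<Sum>j<length (trace A I) - 1. card (moved I (trace A I ! j) (trace A I ! Suc j)))"

definition hist_at :: "item list \<Rightarrow> real \<Rightarrow> event list" where
  "hist_at I t = takeWhile (\<lambda>e. ev_time e \<le> t) (events I)"

definition open_bins_at :: "algorithm \<Rightarrow> item list \<Rightarrow> real \<Rightarrow> nat" where
  "open_bins_at A I t = card (last (A (hist_at I t)) ` present (hist_at I t))"

end

(*
  The algorithm sorts items into size classes: class j holds the sizes in (2^-(j+1), 2^-j],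
  while items of size at most 2^-e, where 2^e bounds the number of items present, share one
  tiny bin of level e. Each class is filled Next-Fit style: an item that does not fit into the
  current bin of its class closes that bin and opens a new one, so a bin is at least half full
  when it is closed. When a departure leaves a closed bin with load below alpha, its items are
  moved into the current bins of their class.

  Hence every nonempty closed bin has load at least alpha, so there are at most OPT_t/alpha of
  them, and the other open bins are one current bin per class and one tiny bin per level,
  O(log rho) in total. Migrations are paid for by the potential beta * max 0 ((1/2 - load) 2^j),
  summed over the nonempty closed bins, where beta = 4 alpha / (1 - 2 alpha): a departure raises
  it by at most beta, and emptying an underfull bin of class j releases at least
  beta (1/2 - alpha) 2^j = 2 alpha 2^j, more than the number of items in that bin.
*)

theory Submission
  imports Defs "HOL-Library.Countable" "HOL-Library.Log_Nat"
begin

lemma sort_key_tagged: "map snd (sort_key fst (map (\<lambda>x. (f x, x)) xs)) = sort_key f xs"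
proof -
  have insort: "insort_key fst (f x, x) (map (\<lambda>x. (f x, x)) ys) =
      map (\<lambda>x. (f x, x)) (insort_key f x ys)" for x ys
    by (induction ys) auto
  have "sort_key fst (map (\<lambda>x. (f x, x)) xs) = map (\<lambda>x. (f x, x)) (sort_key f xs)"
    by (induction xs) (simp_all add: insort)
  then show ?thesis by (simp add: comp_def)
qed

lemma in_set_take_iff_key_less:
  fixes f :: "'a \<Rightarrow> 'b::linorder"
  assumes sorted: "sorted_wrt (<) (map f xs)" and p: "p < length xs"
  shows "x \<in> set (take p xs) \<longleftrightarrow> x \<in> set xs \<and> f x < f (xs ! p)"
proof -
  have less_iff: "f (xs ! q) < f (xs ! p) \<longleftrightarrow> q < p" if "q < length xs" for q
    using sorted_wrt_nth_less[OF sorted, of q p] sorted_wrt_nth_less[OF sorted, of p q] p that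
    by (cases q p rule: linorder_cases) auto
  show ?thesis
    using p by (auto simp: in_set_conv_nth less_iff) (metis less_iff order.strict_trans)
qed

lemma in_set_takeWhile_sorted:
  assumes "sorted (map f xs)" "x \<in> set xs" "f x \<le> t"
  shows "x \<in> set (takeWhile (\<lambda>e. f e \<le> t) xs)"
  using assms by (induction xs) auto

definition blocks :: "(nat \<Rightarrow> 'a list) \<Rightarrow> nat \<Rightarrow> (nat \<times> 'a) list" where
  "blocks B n = concat (map (\<lambda>k. map (Pair k) (B k)) [1..<Suc n])"

lemma blocks_0 [simp]: "blocks B 0 = []"
  and blocks_Suc: "blocks B (Suc n) = blocks B n @ map (Pair (Suc n)) (B (Suc n))"
  unfolding blocks_def by simp_all

lemma set_blocks: "x \<in> set (blocks B n) \<Longrightarrow> fst x \<in> {1..n} \<and> snd x \<in> set (B (fst x))"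
  unfolding blocks_def by auto

lemma last_blocks:
  "\<forall>k\<in>{1..n}. B k \<noteq> [] \<Longrightarrow> 1 \<le> n \<Longrightarrow> blocks B n \<noteq> [] \<and> last (blocks B n) = (n, last (B n))"
  by (induction n) (auto simp: blocks_Suc last_map)

lemma successively_blocks:
  assumes "\<forall>k\<in>{1..n}. B k \<noteq> []"
    and "\<forall>k\<in>{1..n}. successively (\<lambda>a b. R (k, a) (k, b)) (B k)"
    and "\<forall>k. 1 \<le> k \<longrightarrow> k < n \<longrightarrow> R (k, last (B k)) (Suc k, hd (B (Suc k)))"
  shows "successively R (blocks B n)"
  using assms
proof (induction n)
  case (Suc n)
  then show ?case
    using last_blocks[of n B]
    by (cases "n = 0") (auto simp: blocks_Suc successively_append_iff successively_map hd_map)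
qed simp

definition sum_adjacent :: "('a \<Rightarrow> 'a \<Rightarrow> nat) \<Rightarrow> 'a list \<Rightarrow> nat" where
  "sum_adjacent f xs = (\<Sum>j<length xs - 1. f (xs!j) (xs!Suc j))"

lemma sum_adjacent_Nil [simp]: "sum_adjacent f [] = 0"
  and sum_adjacent_single [simp]: "sum_adjacent f [x] = 0"
  and sum_adjacent_Cons2 [simp]: "sum_adjacent f (x # y # zs) = f x y + sum_adjacent f (y # zs)"
  unfolding sum_adjacent_def by (auto simp: sum.lessThan_Suc_shift simp del: sum.lessThan_Suc)

lemma sum_adjacent_append:
  "xs \<noteq> [] \<Longrightarrow> ys \<noteq> [] \<Longrightarrow>
   sum_adjacent f (xs @ ys) = sum_adjacent f xs + f (last xs) (hd ys) + sum_adjacent f ys"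
  by (induction xs rule: induct_list012) (auto simp: neq_Nil_conv)

lemma sum_adjacent_le: "successively (\<lambda>a b. f a b \<le> 1) xs \<Longrightarrow> sum_adjacent f xs \<le> length xs - 1"
  by (induction xs rule: induct_list012) auto

lemma sum_adjacent_blocks_le:
  assumes "\<forall>k\<in>{1..n}. B k \<noteq> []"
    and "\<forall>k\<in>{1..n}. successively (\<lambda>a b. f (k, a) (k, b) \<le> 1) (B k)"
    and "\<forall>k. 1 \<le> k \<longrightarrow> k < n \<longrightarrow> f (k, last (B k)) (Suc k, hd (B (Suc k))) = 0"
  shows "sum_adjacent f (blocks B n) \<le> (\<Sum>k=1..n. length (B k) - 1)"
  using assms
proof (induction n)
  case (Suc n)
  have "sum_adjacent f (map (Pair (Suc n)) (B (Suc n))) \<le> length (map (Pair (Suc n)) (B (Suc n))) - 1"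
    using Suc.prems(2) by (intro sum_adjacent_le) (simp add: successively_map)
  with Suc show ?case
    using last_blocks[of n B]
    by (cases "n = 0") (auto simp: blocks_Suc sum_adjacent_append hd_map)
qed simp

fun event_key :: "event \<Rightarrow> real \<times> nat \<times> nat" where
  "event_key (Dep t i) = (t, 0, i)"
| "event_key (Arr t i s) = (t, 1, i)"

fun is_departure :: "event \<Rightarrow> bool" where
  "is_departure (Arr _ _ _) = False"
| "is_departure (Dep _ _) = True"

definition raw_events :: "item list \<Rightarrow> event list" where
  "raw_events I = map (\<lambda>i. Dep (arr (I!i) + dur (I!i)) i) [0..<length I] @
                  map (\<lambda>i. Arr (arr (I!i)) i (isize (I!i))) [0..<length I]"

lemma events_eq_sort_key: "events I = sort_key event_key (raw_events I)"
proof -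
  have "events I = map snd (sort_key fst (map (\<lambda>e. (event_key e, e)) (raw_events I)))"
    unfolding events_def raw_events_def by (simp add: comp_def)
  then show ?thesis by (simp only: sort_key_tagged)
qed

lemma Arr_in_events_iff:
  "Arr t i s \<in> set (events I) \<longleftrightarrow> i < length I \<and> t = arr (I!i) \<and> s = isize (I!i)"
  unfolding events_eq_sort_key raw_events_def by auto

lemma Dep_in_events_iff: "Dep t i \<in> set (events I) \<longleftrightarrow> i < length I \<and> t = arr (I!i) + dur (I!i)"
  unfolding events_eq_sort_key raw_events_def by auto

lemma length_filter_departures: "length (filter is_departure (events I)) = length I"
  unfolding events_eq_sort_key filter_sort raw_events_def by (simp add: filter_map comp_def)

lemma events_key_strictly_sorted: "sorted_wrt (<) (map event_key (events I))"
proof -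
  have "inj_on event_key (set (raw_events I))"
    unfolding raw_events_def by (auto simp: inj_on_def)
  moreover have "distinct (raw_events I)"
    unfolding raw_events_def by (auto simp: distinct_map inj_on_def)
  ultimately show ?thesis
    unfolding strict_sorted_iff events_eq_sort_key by (simp add: distinct_map)
qed

lemma events_time_sorted: "sorted (map ev_time (events I))"
proof -
  have "sorted_wrt (\<lambda>x y. event_key x < event_key y) (events I)"
    using events_key_strictly_sorted by (simp add: sorted_wrt_map)
  then have "sorted_wrt (\<lambda>x y. ev_time x \<le> ev_time y) (events I)"
  proof (rule sorted_wrt_mono_rel[rotated])
    show "ev_time x \<le> ev_time y" if "event_key x < event_key y" for x y
      using that by (cases x; cases y) (auto simp: less_prod_def)
  qed
  then show ?thesis by (simp add: sorted_wrt_map)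
qed

lemma present_snoc_Arr:
  "(\<forall>t'. Dep t' i \<notin> set h) \<Longrightarrow> present (h @ [Arr t i s]) = insert i (present h)"
  unfolding present_def by auto

lemma present_snoc_Dep: "present (h @ [Dep t i]) = present h - {i}"
  unfolding present_def by auto

context
  fixes I :: "item list"
  assumes wf: "well_formed I"
begin

lemma dur_pos: "i < length I \<Longrightarrow> 0 < dur (I!i)"
  using wf unfolding well_formed_def by auto

lemma present_take_events:
  assumes p: "p < length (events I)"
  shows "present (take p (events I)) = {i. i < length I \<and>
     (arr (I!i), 1, i) < event_key (events I ! p) \<and>
     \<not> (arr (I!i) + dur (I!i), 0, i) < event_key (events I ! p)}"
  using in_set_take_iff_key_less[OF events_key_strictly_sorted p]
  unfolding present_def by (auto simp: Arr_in_events_iff Dep_in_events_iff dest: in_set_takeD)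

lemma present_take_Suc_Arr:
  assumes p: "p < length (events I)" and e: "events I ! p = Arr t i z"
  shows "i < length I" "z = isize (I!i)" "i \<notin> present (take p (events I))"
    "present (take (Suc p) (events I)) = insert i (present (take p (events I)))"
    "present (take (Suc p) (events I)) \<subseteq> present_at I t"
proof -
  have "Arr t i z \<in> set (events I)" using p e nth_mem by metis
  then have i: "i < length I" and t: "t = arr (I!i)" and "z = isize (I!i)"
    by (auto simp: Arr_in_events_iff)
  then show "i < length I" "z = isize (I!i)" by simp_all
  show "i \<notin> present (take p (events I))"
    unfolding present_take_events[OF p] e t by simp
  have "\<forall>t'. Dep t' i \<notin> set (take p (events I))"
    using in_set_take_iff_key_less[OF events_key_strictly_sorted p] dur_pos[OF i]
    by (auto simp: e t Dep_in_events_iff)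
  then show step: "present (take (Suc p) (events I)) = insert i (present (take p (events I)))"
    using p e by (simp add: take_Suc_conv_app_nth present_snoc_Arr)
  show "present (take (Suc p) (events I)) \<subseteq> present_at I t"
    using i dur_pos[OF i] unfolding step present_take_events[OF p] e t present_at_def
    by (auto simp: less_prod_def)
qed

lemma present_take_Suc_Dep:
  assumes p: "p < length (events I)" and e: "events I ! p = Dep t i"
  shows "i \<in> present (take p (events I))"
    "present (take (Suc p) (events I)) = present (take p (events I)) - {i}"
proof -
  have "Dep t i \<in> set (events I)" using p e nth_mem by metis
  then have "i < length I" "t = arr (I!i) + dur (I!i)" by (auto simp: Dep_in_events_iff)
  then show "i \<in> present (take p (events I))"
    unfolding present_take_events[OF p] e using dur_pos by (simp add: less_prod_def)
  show "present (take (Suc p) (events I)) = present (take p (events I)) - {i}"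
    using p e by (simp add: take_Suc_conv_app_nth present_snoc_Dep)
qed

lemma present_hist_at_subset: "present (hist_at I t) \<subseteq> present_at I t"
proof
  fix j assume "j \<in> present (hist_at I t)"
  then obtain tj sj where arrived: "Arr tj j sj \<in> set (hist_at I t)"
    and not_departed: "\<forall>t'. Dep t' j \<notin> set (hist_at I t)"
    unfolding present_def by blast
  have j: "j < length I" and "arr (I!j) \<le> t"
    using set_takeWhileD[OF arrived[unfolded hist_at_def]] by (auto simp: Arr_in_events_iff)
  have "\<not> arr (I!j) + dur (I!j) \<le> t"
  proof
    assume "arr (I!j) + dur (I!j) \<le> t"
    then have "Dep (arr (I!j) + dur (I!j)) j \<in> set (hist_at I t)"
      unfolding hist_at_def using j
      by (intro in_set_takeWhile_sorted[OF events_time_sorted]) (auto simp: Dep_in_events_iff)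
    then show False using not_departed by blast
  qed
  with j \<open>arr (I!j) \<le> t\<close> show "j \<in> present_at I t" unfolding present_at_def by auto
qed

end

lemma hist_at_eq_take: "\<exists>k\<le>length (events I). hist_at I t = take k (events I)"
  unfolding hist_at_def by (metis takeWhile_eq_take length_takeWhile_le)

lemma sum_sizes_le_opt:
  assumes wf: "well_formed I" and P: "P \<subseteq> Q" and Q: "Q \<subseteq> {..<length I}"
  shows "(\<Sum>i\<in>P. isize (I!i)) \<le> real (opt I Q)"
proof -
  have sizes: "0 \<le> isize (I!i) \<and> isize (I!i) \<le> 1" if "i \<in> Q" for i
    using wf Q that unfolding well_formed_def by auto
  have "feasible I Q id"
    unfolding feasible_def
  proof
    fix b
    show "(\<Sum>i\<in>{i\<in>Q. id i = b}. isize (I!i)) \<le> 1"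
    proof (cases "b \<in> Q")
      case True
      then have "{i\<in>Q. id i = b} = {b}" by auto
      then show ?thesis using sizes True by simp
    next
      case False
      then have "{i\<in>Q. id i = b} = {}" by auto
      then show ?thesis by (simp only: sum.empty)
    qed
  qed
  moreover have "\<forall>i\<in>Q. id i < length I" using Q by auto
  ultimately obtain c where c: "\<forall>i\<in>Q. c i < opt I Q" "feasible I Q c"
    using LeastI_ex[of "\<lambda>k. \<exists>c. (\<forall>i\<in>Q. c i < k) \<and> feasible I Q c"] unfolding opt_def by blast
  have fin: "finite Q" using Q finite_subset by blast
  then have "(\<Sum>i\<in>P. isize (I!i)) \<le> (\<Sum>i\<in>Q. isize (I!i))"
    using P sizes by (intro sum_mono2) auto
  also have "\<dots> = (\<Sum>b<opt I Q. \<Sum>i\<in>{i\<in>Q. c i = b}. isize (I!i))"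
    using fin c(1) by (intro sum.group[symmetric]) auto
  also have "\<dots> \<le> (\<Sum>b<opt I Q. 1)"
    using c(2) unfolding feasible_def by (intro sum_mono) auto
  finally show ?thesis by simp
qed

lemma card_present_at_le_rho: "card (present_at I t) \<le> rho I"
proof -
  have "present_at I t' \<subseteq> {..<length I}" for t'
    unfolding present_at_def by auto
  then have "card (present_at I t') \<le> length I" for t'
    by (metis card_lessThan card_mono finite_lessThan)
  then have "range (\<lambda>t. card (present_at I t)) \<subseteq> {..length I}"
    by auto
  then have "finite (range (\<lambda>t. card (present_at I t)))"
    by (rule finite_subset) simp
  then show ?thesis unfolding rho_def by (rule Max_ge) auto
qed

section \<open>Bins and loads\<close>

text \<open>\<open>Tiny e\<close> takes items of size at most \<open>2^-e\<close>; \<open>Class j k\<close> is the \<open>k\<close>-th bin of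
  class \<open>j\<close>, which takes items of size in \<open>(2^-(j+1), 2^-j]\<close>. In a state \<open>s\<close> the bins
  \<open>Class j k\<close> with \<open>k < cur s j\<close> are closed and \<open>Class j (cur s j)\<close> is being filled.
  Departures do not reveal sizes, so the state records them at arrival.\<close>

datatype bin = Tiny nat | Class nat nat

instance bin :: countable by countable_datatype

record state =
  bins :: "nat \<Rightarrow> bin"
  cur :: "nat \<Rightarrow> nat"
  sizes :: "nat \<Rightarrow> real"

definition size_class :: "real \<Rightarrow> nat" where
  "size_class z = (LEAST j. 1 / 2 ^ Suc j < z)"

lemma inverse_pow2_antimono: "a \<le> b \<Longrightarrow> 1 / 2 ^ b \<le> (1 / 2 ^ a :: real)"
  by (simp add: frac_le power_increasing)

lemma size_class_bounds:
  assumes "0 < z" "z \<le> 1"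
  shows "1 / 2 ^ Suc (size_class z) < z" "z \<le> 1 / 2 ^ size_class z"
proof -
  obtain n where "(1/2::real) ^ n < z" using real_arch_pow_inv[OF assms(1), of "1/2"] by auto
  moreover have "1 / 2 ^ Suc n \<le> (1/2::real) ^ n"
    using inverse_pow2_antimono[of n "Suc n"] by (simp add: power_divide)
  ultimately have "\<exists>j. 1 / 2 ^ Suc j < z" by (meson le_less_trans)
  then show "1 / 2 ^ Suc (size_class z) < z" unfolding size_class_def by (rule LeastI_ex)
  show "z \<le> 1 / 2 ^ size_class z"
  proof (cases "size_class z")
    case (Suc m)
    then have "\<not> 1 / 2 ^ Suc m < z" unfolding size_class_def by (metis lessI not_less_Least)
    then show ?thesis using Suc by simp
  qed (use assms in simp)
qed

lemma size_class_eqI: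
  assumes "1 / 2 ^ Suc j < z" "z \<le> 1 / 2 ^ j"
  shows "size_class z = j"
  unfolding size_class_def
proof (rule Least_equality)
  show "j \<le> y" if "1 / 2 ^ Suc y < z" for y
    using that assms(2) inverse_pow2_antimono[of "Suc y" j] by (cases "Suc y \<le> j") auto
qed (rule assms(1))

lemma size_class_less:
  assumes "1 / 2 ^ E < z" "z \<le> 1"
  shows "size_class z < E"
proof (cases E)
  case (Suc m)
  then have "size_class z \<le> m" unfolding size_class_def using assms by (intro Least_le) simp
  then show ?thesis using Suc by simp
qed (use assms in simp)

definition contents :: "state \<Rightarrow> nat set \<Rightarrow> bin \<Rightarrow> nat set" where
  "contents s P b = {i \<in> P. bins s i = b}"

definition load :: "state \<Rightarrow> nat set \<Rightarrow> bin \<Rightarrow> real" where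
  "load s P b = (\<Sum>i\<in>contents s P b. sizes s i)"

lemma load_cong:
  "contents s' P' b = contents s P b \<Longrightarrow> (\<forall>i\<in>contents s P b. sizes s' i = sizes s i) \<Longrightarrow>
   load s' P' b = load s P b"
  unfolding load_def by simp

lemma load_mono:
  "P \<subseteq> P' \<Longrightarrow> finite P' \<Longrightarrow> \<forall>i\<in>P'. 0 \<le> sizes s i \<Longrightarrow> load s P b \<le> load s P' b"
  unfolding load_def contents_def by (intro sum_mono2) auto

lemma member_le_load:
  "finite P \<Longrightarrow> y \<in> contents s P b \<Longrightarrow> \<forall>i\<in>P. 0 \<le> sizes s i \<Longrightarrow> sizes s y \<le> load s P b"
  unfolding load_def contents_def by (intro member_le_sum) auto

lemma load_fun_upd:
  assumes "finite P" "x \<in> P" "bins s' = (bins s)(x := b')" "sizes s' = sizes s"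
  shows "load s' P b = load s (P - {x}) b + (if b = b' then sizes s x else 0)"
proof -
  have "contents s' P b = contents s (P - {x}) b \<union> (if b = b' then {x} else {})"
    using assms unfolding contents_def by auto
  then show ?thesis
    using assms unfolding load_def by (simp add: contents_def add.commute)
qed

lemma load_le_one_if_small:
  assumes "finite P" "card P \<le> 2 ^ e" "\<forall>i\<in>contents s P b. sizes s i \<le> 1 / 2 ^ e"
  shows "load s P b \<le> 1"
proof -
  have "load s P b \<le> real (card (contents s P b)) * (1 / 2 ^ e)"
    unfolding load_def using assms(3) by (intro sum_bounded_above) auto
  also have "\<dots> \<le> real (card P) * (1 / 2 ^ e)"
    using assms(1) card_mono[OF assms(1), of "contents s P b"]
    by (intro mult_right_mono) (auto simp: contents_def)
  also have "\<dots> \<le> 1" using assms(2) by (simp add: field_simps)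
  finally show ?thesis .
qed

definition placed_ok :: "nat \<Rightarrow> state \<Rightarrow> nat \<Rightarrow> bool" where
  "placed_ok E s i \<longleftrightarrow> (case bins s i of
      Tiny e \<Rightarrow> e \<le> E \<and> 0 \<le> sizes s i \<and> sizes s i \<le> 1 / 2 ^ e
    | Class j k \<Rightarrow> j < E \<and> k \<le> cur s j \<and> 1 / 2 ^ Suc j < sizes s i \<and> sizes s i \<le> 1 / 2 ^ j)"

definition packing_ok :: "nat \<Rightarrow> nat set \<Rightarrow> state \<Rightarrow> bool" where
  "packing_ok E P s \<longleftrightarrow> finite P \<and> (\<forall>i\<in>P. placed_ok E s i) \<and> (\<forall>b. load s P b \<le> 1)"

lemma placed_ok_nonneg: "placed_ok E s i \<Longrightarrow> 0 \<le> sizes s i"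
  unfolding placed_ok_def by (auto split: bin.splits)

lemma placed_ok_Class:
  "bins s i = Class j k \<Longrightarrow>
   placed_ok E s i \<longleftrightarrow> j < E \<and> k \<le> cur s j \<and> 1 / 2 ^ Suc j < sizes s i \<and> sizes s i \<le> 1 / 2 ^ j"
  unfolding placed_ok_def by simp

lemma placed_ok_mono:
  "placed_ok E s i \<Longrightarrow> bins s' i = bins s i \<Longrightarrow> sizes s' i = sizes s i \<Longrightarrow> cur s \<le> cur s' \<Longrightarrow>
   placed_ok E s' i"
  unfolding placed_ok_def by (auto split: bin.splits intro: order.trans[OF _ le_funD])

lemma packing_ok_nonneg: "packing_ok E P s \<Longrightarrow> \<forall>i\<in>P. 0 \<le> sizes s i"
  unfolding packing_ok_def using placed_ok_nonneg by blast

lemma packing_ok_subset: "packing_ok E P s \<Longrightarrow> P' \<subseteq> P \<Longrightarrow> packing_ok E P' s"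
  unfolding packing_ok_def
  using load_mono[of P' P s] placed_ok_nonneg by (meson finite_subset order_trans subset_iff)

lemma packing_ok_update_size:
  assumes ok: "packing_ok E P s" and i: "i \<notin> P"
  shows "packing_ok E P (s\<lparr>sizes := (sizes s)(i := z)\<rparr>)"
proof -
  have "placed_ok E (s\<lparr>sizes := (sizes s)(i := z)\<rparr>) x" if "x \<in> P" for x
  proof -
    have "placed_ok E s x" using ok that unfolding packing_ok_def by blast
    moreover have "x \<noteq> i" using i that by blast
    ultimately show ?thesis using placed_ok_mono[of E s x "s\<lparr>sizes := (sizes s)(i := z)\<rparr>"] by simp
  qed
  moreover have "load (s\<lparr>sizes := (sizes s)(i := z)\<rparr>) P b = load s P b" for b
    using i by (intro load_cong) (auto simp: contents_def)
  ultimately show ?thesis using ok unfolding packing_ok_def by simp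
qed

lemma packing_ok_fun_upd:
  assumes ok: "packing_ok E (P - {x}) s" and x: "x \<in> P"
    and upd: "bins s' = (bins s)(x := b)" "sizes s' = sizes s" "cur s \<le> cur s'"
    and placed: "placed_ok E s' x" and room: "load s' P b \<le> 1"
  shows "packing_ok E P s'"
proof -
  have fin: "finite P" using ok unfolding packing_ok_def by simp
  have "placed_ok E s' i" if "i \<in> P" for i
  proof (cases "i = x")
    case False
    with that ok have "placed_ok E s i" unfolding packing_ok_def by blast
    then show ?thesis using placed_ok_mono[of E s i s'] False upd by simp
  qed (use placed in simp)
  moreover have "load s' P c \<le> 1" for c
    using load_fun_upd[OF fin x upd(1,2), of c] ok room unfolding packing_ok_def
    by (cases "c = b") simp_all
  ultimately show ?thesis using fin unfolding packing_ok_def by blast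
qed

text \<open>For \<open>j = 0\<close> the bin already holds an item larger than \<open>1/2\<close>.\<close>
lemma half_full_if_no_room:
  assumes ok: "packing_ok E P s" and no_room: "1 < load s P (Class j k) + z" and z: "z \<le> 1 / 2 ^ j"
  shows "1/2 \<le> load s P (Class j k)"
proof (cases j)
  case 0
  with no_room z have "0 < load s P (Class 0 k)" by simp
  then obtain y where y: "y \<in> contents s P (Class 0 k)"
    unfolding load_def by (metis all_not_in_conv sum.empty less_irrefl)
  then have "placed_ok E s y" "bins s y = Class 0 k"
    using ok unfolding packing_ok_def contents_def by auto
  then have "1/2 < sizes s y" by (simp add: placed_ok_Class)
  moreover have "sizes s y \<le> load s P (Class 0 k)"
    using ok y packing_ok_nonneg[OF ok] unfolding packing_ok_def by (intro member_le_load) auto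
  ultimately show ?thesis using 0 by simp
next
  case (Suc m)
  then have "z \<le> 1/2" using order_trans[OF z inverse_pow2_antimono[of 1 j]] by simp
  then show ?thesis using no_room by simp
qed

definition closes_half_full :: "state \<Rightarrow> state \<Rightarrow> nat set \<Rightarrow> bool" where
  "closes_half_full s s' P \<longleftrightarrow> cur s \<le> cur s' \<and>
     (\<forall>j k. cur s j \<le> k \<longrightarrow> k < cur s' j \<longrightarrow> 1/2 \<le> load s' P (Class j k))"

lemma closes_half_full_trans:
  assumes s1: "closes_half_full s s1 P" and s2: "closes_half_full s1 s2 P"
    and sizes: "sizes s2 = sizes s1"
    and kept: "\<And>j k. cur s j \<le> k \<Longrightarrow> k < cur s1 j \<Longrightarrow>
      contents s2 P (Class j k) = contents s1 P (Class j k)"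
  shows "closes_half_full s s2 P"
proof -
  have "1/2 \<le> load s2 P (Class j k)" if "cur s j \<le> k" "k < cur s2 j" for j k
  proof (cases "k < cur s1 j")
    case True
    then have "load s2 P (Class j k) = load s1 P (Class j k)"
      using kept that sizes by (intro load_cong) auto
    then show ?thesis using s1 that True unfolding closes_half_full_def by auto
  next
    case False
    then show ?thesis using s2 that unfolding closes_half_full_def by (simp add: not_less)
  qed
  moreover have "cur s \<le> cur s2"
    using s1 s2 unfolding closes_half_full_def by (blast intro: order_trans)
  ultimately show ?thesis unfolding closes_half_full_def by blast
qed

definition place :: "nat set \<Rightarrow> nat \<Rightarrow> state \<Rightarrow> state" where
  "place P x s = (let j = size_class (sizes s x); k = cur s j in
     if load s (P - {x}) (Class j k) + sizes s x \<le> 1 then s\<lparr>bins := (bins s)(x := Class j k)\<rparr>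
     else s\<lparr>bins := (bins s)(x := Class j (Suc k)), cur := (cur s)(j := Suc k)\<rparr>)"

lemma place_props:
  fixes P x s
  defines "j \<equiv> size_class (sizes s x)" and "s' \<equiv> place P x s"
  assumes ok: "packing_ok E (P - {x}) s" and x: "x \<in> P"
    and sx: "0 < sizes s x" "sizes s x \<le> 1" and jE: "j < E"
  shows "packing_ok E P s'"
    and "bins s' = (bins s)(x := Class j (cur s' j))"
    and "sizes s' = sizes s"
    and "closes_half_full s s' P"
    and "\<forall>j'. j' \<noteq> j \<longrightarrow> cur s' j' = cur s j'"
proof -
  let ?k = "cur s j" and ?L = "load s (P - {x}) (Class j (cur s j))"
  have fin: "finite P" using ok unfolding packing_ok_def by simp
  have bounds: "1 / 2 ^ Suc j < sizes s x" "sizes s x \<le> 1 / 2 ^ j"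
    using size_class_bounds[OF sx] unfolding j_def by auto
  have "packing_ok E P s' \<and> bins s' = (bins s)(x := Class j (cur s' j)) \<and> sizes s' = sizes s \<and>
    closes_half_full s s' P \<and> (\<forall>j'. j' \<noteq> j \<longrightarrow> cur s' j' = cur s j')"
  proof (cases "?L + sizes s x \<le> 1")
    case True
    then have s': "s' = s\<lparr>bins := (bins s)(x := Class j ?k)\<rparr>"
      unfolding s'_def place_def j_def Let_def by simp
    have "load s' P (Class j ?k) \<le> 1"
      using True load_fun_upd[OF fin x, of s' s "Class j ?k"] by (simp add: s')
    moreover have "placed_ok E s' x" using bounds jE by (simp add: s' placed_ok_Class)
    ultimately have "packing_ok E P s'"
      by (intro packing_ok_fun_upd[OF ok x]) (simp_all add: s')
    then show ?thesis by (simp add: s' closes_half_full_def)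
  next
    case False
    then have s': "s' = s\<lparr>bins := (bins s)(x := Class j (Suc ?k)), cur := (cur s)(j := Suc ?k)\<rparr>"
      unfolding s'_def place_def j_def Let_def by simp
    have "bins s i \<noteq> Class j (Suc ?k)" if "i \<in> P - {x}" for i
    proof
      assume "bins s i = Class j (Suc ?k)"
      moreover have "placed_ok E s i" using ok that unfolding packing_ok_def by blast
      ultimately show False by (simp add: placed_ok_Class)
    qed
    then have "contents s (P - {x}) (Class j (Suc ?k)) = {}" unfolding contents_def by blast
    then have "load s' P (Class j (Suc ?k)) \<le> 1"
      using sx load_fun_upd[OF fin x, of s' s "Class j (Suc ?k)"] by (simp add: s' load_def)
    moreover have "placed_ok E s' x" using bounds jE by (simp add: s' placed_ok_Class)
    ultimately have "packing_ok E P s'"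
      by (intro packing_ok_fun_upd[OF ok x]) (simp_all add: s' le_fun_def)
    moreover have "1/2 \<le> load s' P (Class j' k)" if "cur s j' \<le> k" "k < cur s' j'" for j' k
    proof -
      have "j' = j" "k = ?k" using that by (auto simp: s' split: if_splits)
      moreover have "load s' P (Class j ?k) = ?L"
        using load_fun_upd[OF fin x, of s' s "Class j (Suc ?k)"] by (simp add: s')
      ultimately show ?thesis using half_full_if_no_room[OF ok _ bounds(2)] False by simp
    qed
    ultimately show ?thesis by (simp add: s' closes_half_full_def le_fun_def)
  qed
  then show "packing_ok E P s'" and "bins s' = (bins s)(x := Class j (cur s' j))"
    and "sizes s' = sizes s"
    and "closes_half_full s s' P" and "\<forall>j'. j' \<noteq> j \<longrightarrow> cur s' j' = cur s j'"
    by blast+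
qed

lemma place_Class_props:
  assumes ok: "packing_ok E P s" and x: "x \<in> P" and bin: "bins s x = Class j k"
  shows "packing_ok E P (place P x s)"
    and "bins (place P x s) = (bins s)(x := Class j (cur (place P x s) j))"
    and "sizes (place P x s) = sizes s"
    and "closes_half_full s (place P x s) P"
    and "\<forall>j'. j' \<noteq> j \<longrightarrow> cur (place P x s) j' = cur s j'"
proof -
  have "placed_ok E s x" using ok x unfolding packing_ok_def by blast
  then have j: "j < E" and bounds: "1 / 2 ^ Suc j < sizes s x" "sizes s x \<le> 1 / 2 ^ j"
    using bin by (simp_all add: placed_ok_Class)
  have "size_class (sizes s x) = j" using bounds by (rule size_class_eqI)
  moreover have "0 < sizes s x" by (rule less_trans[OF _ bounds(1)]) simp
  moreover have "sizes s x \<le> 1" using order_trans[OF bounds(2) inverse_pow2_antimono[of 0 j]] by simp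
  moreover have "packing_ok E (P - {x}) s" using ok by (rule packing_ok_subset) blast
  ultimately show "packing_ok E P (place P x s)"
    and "bins (place P x s) = (bins s)(x := Class j (cur (place P x s) j))"
    and "sizes (place P x s) = sizes s"
    and "closes_half_full s (place P x s) P"
    and "\<forall>j'. j' \<noteq> j \<longrightarrow> cur (place P x s) j' = cur s j'"
    using place_props[of E P x s] x j by simp_all
qed

fun place_all :: "nat set \<Rightarrow> nat list \<Rightarrow> state \<Rightarrow> state list" where
  "place_all P [] s = []"
| "place_all P (x # xs) s = place P x s # place_all P xs (place P x s)"

lemma place_all_props:
  assumes "packing_ok E P s" "distinct xs" "set xs \<subseteq> P"
    "\<forall>x\<in>set xs. bins s x = Class j k0" "k0 < cur s j"
  shows "(\<forall>t\<in>set (place_all P xs s). packing_ok E P t \<and> sizes t = sizes s) \<and>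
    successively (\<lambda>t u. \<exists>y v. bins u = (bins t)(y := v)) (s # place_all P xs s) \<and>
    (\<forall>x. x \<notin> set xs \<longrightarrow> bins (last (s # place_all P xs s)) x = bins s x) \<and>
    (\<forall>x\<in>set xs. \<exists>k. bins (last (s # place_all P xs s)) x = Class j k \<and> cur s j \<le> k) \<and>
    (\<forall>j'. j' \<noteq> j \<longrightarrow> cur (last (s # place_all P xs s)) j' = cur s j') \<and>
    closes_half_full s (last (s # place_all P xs s)) P \<and>
    length (place_all P xs s) = length xs"
  using assms
proof (induction xs arbitrary: s)
  case Nil
  then show ?case by (simp add: closes_half_full_def)
next
  case (Cons x xs)
  define s1 where "s1 = place P x s"
  define s' where "s' = last (s1 # place_all P xs s1)"
  have x: "x \<in> P" "x \<notin> set xs" and bin: "bins s x = Class j k0" using Cons.prems by auto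
  note place = place_Class_props[OF Cons.prems(1) x(1) bin, folded s1_def]
  have cur_le: "cur s \<le> cur s1" using place(4) unfolding closes_half_full_def by blast
  have cur_j: "cur s j \<le> cur s1 j" using le_funD[OF cur_le] .
  note cur_other = place(5)
  have "distinct xs" "set xs \<subseteq> P" "\<forall>y\<in>set xs. bins s1 y = Class j k0" "k0 < cur s1 j"
    using Cons.prems place(2) x(2) cur_j by auto
  note IH = Cons.IH[OF place(1) this, folded s'_def]
  then have ts: "\<forall>t\<in>set (place_all P xs s1). packing_ok E P t \<and> sizes t = sizes s1"
    and succ: "successively (\<lambda>t u. \<exists>y v. bins u = (bins t)(y := v)) (s1 # place_all P xs s1)"
    and kept: "\<forall>y. y \<notin> set xs \<longrightarrow> bins s' y = bins s1 y"
    and moved: "\<forall>y\<in>set xs. \<exists>k. bins s' y = Class j k \<and> cur s1 j \<le> k"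
    and other: "\<forall>j'. j' \<noteq> j \<longrightarrow> cur s' j' = cur s1 j'"
    and closes: "closes_half_full s1 s' P"
    and len: "length (place_all P xs s1) = length xs"
    by blast+
  have sizes': "sizes s' = sizes s1"
    using ts unfolding s'_def by (cases "place_all P xs s1") auto
  have "contents s' P (Class j' k) = contents s1 P (Class j' k)"
    if "cur s j' \<le> k" "k < cur s1 j'" for j' k
  proof -
    have "bins s' i = Class j' k \<longleftrightarrow> bins s1 i = Class j' k" for i
    proof (cases "i \<in> set xs")
      case True
      then obtain k' where "bins s' i = Class j k'" "cur s1 j \<le> k'" using moved by blast
      moreover have "bins s1 i = Class j k0" using True x(2) place(2) Cons.prems(4) by auto
      ultimately show ?thesis using that Cons.prems(5) by auto
    qed (use kept in simp)
    then show ?thesis unfolding contents_def by blast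
  qed
  then have "closes_half_full s s' P" by (rule closes_half_full_trans[OF place(4) closes sizes'])
  moreover have "bins s' x = Class j (cur s1 j)" using kept x(2) place(2) by simp
  moreover have "successively (\<lambda>t u. \<exists>y v. bins u = (bins t)(y := v)) (s # s1 # place_all P xs s1)"
    unfolding successively.simps(3) using succ place(2) by blast
  moreover have "place_all P (x # xs) s = s1 # place_all P xs s1" by (simp add: s1_def)
  moreover have "last (s # s1 # place_all P xs s1) = s'" unfolding s'_def by simp
  ultimately show ?case
    using ts kept moved other len place(1-3) cur_j cur_other order_trans[OF cur_j]
    by (simp only:) auto
qed

section \<open>Invariant and potential\<close>

definition alg_invariant :: "real \<Rightarrow> nat \<Rightarrow> nat set \<Rightarrow> state \<Rightarrow> bool" where
  "alg_invariant \<alpha> E P s \<longleftrightarrow> packing_ok E P s \<and>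
     (\<forall>j k. k < cur s j \<longrightarrow> contents s P (Class j k) \<noteq> {} \<longrightarrow> \<alpha> \<le> load s P (Class j k)) \<and>
     (\<forall>j. E \<le> j \<longrightarrow> cur s j = 0)"

definition closed_bins :: "state \<Rightarrow> (nat \<times> nat) set" where
  "closed_bins s = {(j, k). k < cur s j}"

definition bin_potential :: "real \<Rightarrow> state \<Rightarrow> nat set \<Rightarrow> nat \<Rightarrow> nat \<Rightarrow> real" where
  "bin_potential \<beta> s P j k = (if contents s P (Class j k) = {} then 0
     else \<beta> * max 0 ((1/2 - load s P (Class j k)) * 2 ^ j))"

definition potential :: "real \<Rightarrow> state \<Rightarrow> nat set \<Rightarrow> real" where
  "potential \<beta> s P = (\<Sum>(j, k)\<in>closed_bins s. bin_potential \<beta> s P j k)"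

lemma finite_closed_bins: "\<forall>j. E \<le> j \<longrightarrow> cur s j = 0 \<Longrightarrow> finite (closed_bins s)"
proof -
  assume "\<forall>j. E \<le> j \<longrightarrow> cur s j = 0"
  then have "closed_bins s \<subseteq> Sigma {..<E} (\<lambda>j. {..<cur s j})"
    unfolding closed_bins_def by (auto simp: not_less[symmetric])
  then show ?thesis by (rule finite_subset) simp
qed

lemma bin_potential_nonneg: "0 \<le> \<beta> \<Longrightarrow> 0 \<le> bin_potential \<beta> s P j k"
  unfolding bin_potential_def by simp

lemma potential_nonneg: "0 \<le> \<beta> \<Longrightarrow> 0 \<le> potential \<beta> s P"
  unfolding potential_def by (rule sum_nonneg) (auto intro: bin_potential_nonneg)

lemma bin_potential_cong:
  "contents s' P' (Class j k) = contents s P (Class j k) \<Longrightarrow>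
   \<forall>i\<in>contents s P (Class j k). sizes s' i = sizes s i \<Longrightarrow>
   bin_potential \<beta> s' P' j k = bin_potential \<beta> s P j k"
  unfolding bin_potential_def using load_cong[of s' P' "Class j k" s P] by simp

lemma bin_potential_half_full: "1/2 \<le> load s P (Class j k) \<Longrightarrow> bin_potential \<beta> s P j k = 0"
  unfolding bin_potential_def by (simp add: mult_nonpos_nonneg)

text \<open>Closing a bin only when it is half full never creates potential.\<close>
lemma potential_eq_sum_old_closed:
  assumes "closes_half_full s s' P" "finite (closed_bins s')"
  shows "potential \<beta> s' P = (\<Sum>(j, k)\<in>closed_bins s. bin_potential \<beta> s' P j k)"
proof -
  have "cur s \<le> cur s'" using assms(1) unfolding closes_half_full_def by blast
  then have "closed_bins s \<subseteq> closed_bins s'"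
    unfolding closed_bins_def by clarsimp (meson le_funD order.strict_trans2)
  moreover have "bin_potential \<beta> s' P j k = 0" if "(j, k) \<in> closed_bins s' - closed_bins s" for j k
    using assms(1) that unfolding closes_half_full_def closed_bins_def
    by (auto intro: bin_potential_half_full)
  ultimately show ?thesis
    unfolding potential_def using assms(2) by (intro sum.mono_neutral_right) auto
qed

lemma potential_emptied_bin:
  assumes closes: "closes_half_full s s' P" and fin: "finite (closed_bins s)" "finite (closed_bins s')"
    and jk0: "(j, k0) \<in> closed_bins s" and emptied: "contents s' P (Class j k0) = {}"
    and same: "\<forall>j' k'. k' < cur s j' \<longrightarrow> (j', k') \<noteq> (j, k0) \<longrightarrow>
      contents s' P (Class j' k') = contents s P (Class j' k')"
    and sizes: "sizes s' = sizes s"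
  shows "potential \<beta> s' P = potential \<beta> s P - bin_potential \<beta> s P j k0"
proof -
  have "bin_potential \<beta> s' P (fst x) (snd x) = bin_potential \<beta> s P (fst x) (snd x)"
    if "x \<in> closed_bins s - {(j, k0)}" for x
  proof -
    obtain j' k' where x: "x = (j', k')" by (cases x)
    with that have "k' < cur s j'" "(j', k') \<noteq> (j, k0)" by (auto simp: closed_bins_def)
    then have "contents s' P (Class j' k') = contents s P (Class j' k')" using same by blast
    then show ?thesis unfolding x using sizes by (intro bin_potential_cong) auto
  qed
  moreover have "bin_potential \<beta> s' P j k0 = 0" using emptied by (simp add: bin_potential_def)
  ultimately have "(\<Sum>(j', k')\<in>closed_bins s. bin_potential \<beta> s' P j' k')
      = (\<Sum>(j', k')\<in>closed_bins s - {(j, k0)}. bin_potential \<beta> s P j' k')"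
    by (simp add: sum.remove[OF fin(1) jk0] case_prod_beta')
  also have "\<dots> = potential \<beta> s P - bin_potential \<beta> s P j k0"
    unfolding potential_def by (simp add: sum.remove[OF fin(1) jk0])
  finally show ?thesis using potential_eq_sum_old_closed[OF closes fin(2)] by simp
qed

lemma sum_le_sum_add_at:
  fixes f g :: "'a \<Rightarrow> real"
  assumes "finite A" "\<And>x. x \<in> A \<Longrightarrow> x \<noteq> a \<Longrightarrow> f x \<le> g x" "a \<in> A \<Longrightarrow> f a \<le> g a + d" "0 \<le> d"
  shows "sum f A \<le> sum g A + d"
proof (cases "a \<in> A")
  case True
  have "sum f A = f a + sum f (A - {a})" using assms(1) True by (simp add: sum.remove)
  also have "\<dots> \<le> (g a + d) + sum g (A - {a})" using assms True by (intro add_mono sum_mono) auto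
  also have "\<dots> = sum g A + d" using assms(1) True by (simp add: sum.remove)
  finally show ?thesis .
next
  case False
  then have "sum f A \<le> sum g A" using assms by (intro sum_mono) auto
  then show ?thesis using assms(4) by simp
qed

lemma bin_potential_remove:
  assumes fin: "finite P" and i: "i \<in> contents s P (Class j k)" and nonneg: "\<forall>x\<in>P. 0 \<le> sizes s x"
    and small: "sizes s i \<le> 1 / 2 ^ j" and \<beta>: "0 \<le> \<beta>"
  shows "bin_potential \<beta> s (P - {i}) j k \<le> bin_potential \<beta> s P j k + \<beta>"
proof -
  let ?L = "load s P (Class j k)"
  have "contents s (P - {i}) (Class j k) = contents s P (Class j k) - {i}"
    unfolding contents_def by auto
  moreover have "finite (contents s P (Class j k))" using fin unfolding contents_def by simp
  ultimately have L: "?L = load s (P - {i}) (Class j k) + sizes s i"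
    using i unfolding load_def by (simp add: sum_diff1)
  have "(1/2 - load s (P - {i}) (Class j k)) * 2 ^ j = (1/2 - ?L) * 2 ^ j + sizes s i * 2 ^ j"
    unfolding L by (simp add: algebra_simps)
  moreover have "0 \<le> sizes s i * 2 ^ j" "sizes s i * 2 ^ j \<le> 1"
    using nonneg i small unfolding contents_def by (auto simp: field_simps)
  ultimately have "max 0 ((1/2 - load s (P - {i}) (Class j k)) * 2 ^ j)
      \<le> max 0 ((1/2 - ?L) * 2 ^ j) + 1"
    by linarith
  then have "\<beta> * max 0 ((1/2 - load s (P - {i}) (Class j k)) * 2 ^ j)
      \<le> \<beta> * (max 0 ((1/2 - ?L) * 2 ^ j) + 1)"
    by (rule mult_left_mono[OF _ \<beta>])
  moreover have "bin_potential \<beta> s (P - {i}) j k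
      \<le> \<beta> * max 0 ((1/2 - load s (P - {i}) (Class j k)) * 2 ^ j)"
    unfolding bin_potential_def using \<beta> by simp
  moreover have "bin_potential \<beta> s P j k = \<beta> * max 0 ((1/2 - ?L) * 2 ^ j)"
    using i unfolding bin_potential_def by auto
  ultimately show ?thesis by (simp add: distrib_left)
qed

text \<open>A departure raises the potential by at most \<open>\<beta>\<close>: only the bin of the departing item
  changes, and its load drops by at most \<open>2^-j\<close>.\<close>
lemma potential_remove:
  assumes inv: "alg_invariant \<alpha> E P s" and i: "i \<in> P" and \<beta>: "0 \<le> \<beta>"
  shows "potential \<beta> s (P - {i}) \<le> potential \<beta> s P + \<beta>"
proof -
  have ok: "packing_ok E P s" and fin: "finite (closed_bins s)"
    using inv finite_closed_bins unfolding alg_invariant_def by blast+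
  have same: "bin_potential \<beta> s (P - {i}) j k = bin_potential \<beta> s P j k"
    if "bins s i \<noteq> Class j k" for j k
    using that by (intro bin_potential_cong) (auto simp: contents_def)
  show ?thesis
  proof (cases "bins s i")
    case (Tiny e)
    then have "potential \<beta> s (P - {i}) = potential \<beta> s P"
      unfolding potential_def by (intro sum.cong) (auto simp: same)
    then show ?thesis using \<beta> by simp
  next
    case (Class j0 k0)
    have "placed_ok E s i" using ok i unfolding packing_ok_def by blast
    then have "sizes s i \<le> 1 / 2 ^ j0" using Class by (simp add: placed_ok_Class)
    then have "bin_potential \<beta> s (P - {i}) j0 k0 \<le> bin_potential \<beta> s P j0 k0 + \<beta>"
      using ok Class i \<beta> packing_ok_nonneg[OF ok] unfolding packing_ok_def
      by (intro bin_potential_remove) (auto simp: contents_def)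
    then show ?thesis
      unfolding potential_def
    proof (intro sum_le_sum_add_at[OF fin _ _ \<beta>, where a = "(j0, k0)"])
      fix jk assume "jk \<in> closed_bins s" "jk \<noteq> (j0, k0)"
      then show "(case jk of (j, k) \<Rightarrow> bin_potential \<beta> s (P - {i}) j k)
          \<le> (case jk of (j, k) \<Rightarrow> bin_potential \<beta> s P j k)"
        using same[of "fst jk" "snd jk"] Class by (cases jk) auto
    qed simp
  qed
qed

text \<open>An underfull bin of class \<open>j\<close> holds fewer than \<open>2\<alpha> 2^j\<close> items, which its potential pays for.\<close>
lemma card_contents_le_bin_potential:
  assumes ok: "packing_ok E Q s" and low: "load s Q (Class j k) < \<alpha>"
    and \<beta>: "0 \<le> \<beta>" and \<alpha>\<beta>: "2 * \<alpha> \<le> \<beta> * (1/2 - \<alpha>)"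
  shows "real (card (contents s Q (Class j k))) \<le> bin_potential \<beta> s Q j k"
proof (cases "contents s Q (Class j k) = {}")
  case False
  have "1 / 2 ^ Suc j \<le> sizes s x" if "x \<in> contents s Q (Class j k)" for x
  proof -
    have "placed_ok E s x" "bins s x = Class j k"
      using ok that unfolding packing_ok_def contents_def by auto
    then show ?thesis by (simp add: placed_ok_Class)
  qed
  then have "real (card (contents s Q (Class j k))) * (1 / 2 ^ Suc j) \<le> load s Q (Class j k)"
    unfolding load_def by (rule sum_bounded_below)
  then have "real (card (contents s Q (Class j k))) \<le> 2 * load s Q (Class j k) * 2 ^ j"
    by (simp add: field_simps)
  also have "\<dots> \<le> 2 * \<alpha> * 2 ^ j" using low by simp
  also have "\<dots> \<le> \<beta> * (1/2 - \<alpha>) * 2 ^ j" using \<alpha>\<beta> by simp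
  also have "\<dots> = \<beta> * ((1/2 - \<alpha>) * 2 ^ j)" by simp
  also have "\<dots> \<le> \<beta> * ((1/2 - load s Q (Class j k)) * 2 ^ j)"
    using low \<beta> by (intro mult_left_mono mult_right_mono) auto
  also have "\<dots> \<le> bin_potential \<beta> s Q j k"
    unfolding bin_potential_def using False \<beta> by (simp add: mult_left_mono)
  finally show ?thesis .
qed (simp add: bin_potential_def)

text \<open>Closed bins are at least \<open>\<alpha>\<close> full; besides them there is at most one current bin per
  class \<open>j < E\<close> and one bin per tiny level \<open>e \<le> E\<close>.\<close>
lemma card_bins_le:
  assumes inv: "alg_invariant \<alpha> E P s" and \<alpha>: "0 < \<alpha>"
  shows "real (card (bins s ` P)) \<le> (\<Sum>i\<in>P. sizes s i) / \<alpha> + real (2 * E + 1)"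
proof -
  have ok: "packing_ok E P s" using inv unfolding alg_invariant_def by blast
  then have fin: "finite P" and nonneg: "\<forall>i\<in>P. 0 \<le> sizes s i"
    using packing_ok_nonneg unfolding packing_ok_def by blast+
  define closed where "closed = {b \<in> bins s ` P. \<exists>j k. b = Class j k \<and> k < cur s j}"
  have "bins s ` P - closed \<subseteq> Tiny ` {..E} \<union> (\<lambda>j. Class j (cur s j)) ` {..<E}"
  proof
    fix b assume b: "b \<in> bins s ` P - closed"
    then obtain i where i: "i \<in> P" "bins s i = b" by blast
    then have "placed_ok E s i" using ok unfolding packing_ok_def by blast
    then show "b \<in> Tiny ` {..E} \<union> (\<lambda>j. Class j (cur s j)) ` {..<E}"
      using b i unfolding closed_def placed_ok_def by (auto split: bin.splits)
  qed
  then have "card (bins s ` P - closed) \<le> card (Tiny ` {..E} \<union> (\<lambda>j. Class j (cur s j)) ` {..<E})"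
    by (intro card_mono) auto
  also have "\<dots> \<le> card (Tiny ` {..E}) + card ((\<lambda>j. Class j (cur s j)) ` {..<E})"
    by (rule card_Un_le)
  also have "\<dots> \<le> card {..E} + card {..<E}" by (intro add_mono card_image_le) auto
  finally have other: "card (bins s ` P - closed) \<le> 2 * E + 1" by simp
  have "real (card closed) * \<alpha> \<le> (\<Sum>b\<in>closed. load s P b)"
  proof (rule sum_bounded_below)
    fix b assume "b \<in> closed"
    then obtain j k i where "b = Class j k" "k < cur s j" "i \<in> P" "bins s i = b"
      unfolding closed_def by auto
    then show "\<alpha> \<le> load s P b" using inv unfolding alg_invariant_def contents_def by blast
  qed
  also have "\<dots> \<le> (\<Sum>b\<in>bins s ` P. load s P b)"
    using fin nonneg unfolding closed_def load_def
    by (intro sum_mono2) (auto intro!: sum_nonneg simp: contents_def)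
  also have "\<dots> = (\<Sum>i\<in>P. sizes s i)"
    unfolding load_def contents_def using fin by (intro sum.group) auto
  finally have "real (card closed) \<le> (\<Sum>i\<in>P. sizes s i) / \<alpha>" using \<alpha> by (simp add: field_simps)
  moreover have "bins s ` P = closed \<union> (bins s ` P - closed)" unfolding closed_def by blast
  then have "card (bins s ` P) \<le> card closed + card (bins s ` P - closed)"
    by (metis card_Un_le)
  ultimately show ?thesis using other by linarith
qed

section \<open>Arrivals and departures\<close>

definition arrive :: "nat set \<Rightarrow> nat \<Rightarrow> real \<Rightarrow> state \<Rightarrow> state" where
  "arrive Q i z s = (let s1 = s\<lparr>sizes := (sizes s)(i := z)\<rparr>; e = ceillog2 (card Q) in
     if z \<le> 1 / 2 ^ e then s1\<lparr>bins := (bins s)(i := Tiny e)\<rparr> else place Q i s1)"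

lemma arrive_props:
  fixes P i z s
  defines "Q \<equiv> insert i P"
  defines "s' \<equiv> arrive Q i z s"
  assumes ok: "packing_ok E P s" and cur: "\<forall>j. E \<le> j \<longrightarrow> cur s j = 0" and i: "i \<notin> P"
    and z: "0 \<le> z" "z \<le> 1" and E: "ceillog2 (card Q) \<le> E"
  shows "packing_ok E Q s'"
    and "\<forall>x\<in>P. bins s' x = bins s x"
    and "sizes s' = (sizes s)(i := z)"
    and "\<forall>j k. bins s' i = Class j k \<longrightarrow> cur s j \<le> k"
    and "closes_half_full s s' Q"
    and "\<forall>j. E \<le> j \<longrightarrow> cur s' j = 0"
proof -
  define e where "e = ceillog2 (card Q)"
  define s1 where "s1 = s\<lparr>sizes := (sizes s)(i := z)\<rparr>"
  have fin: "finite Q" using ok unfolding Q_def packing_ok_def by simp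
  have P: "Q - {i} = P" using i unfolding Q_def by simp
  have ok1: "packing_ok E (Q - {i}) s1"
    unfolding P s1_def using ok i by (rule packing_ok_update_size)
  have "packing_ok E Q s' \<and> (\<forall>x\<in>P. bins s' x = bins s x) \<and> sizes s' = (sizes s)(i := z) \<and>
    (\<forall>j k. bins s' i = Class j k \<longrightarrow> cur s j \<le> k) \<and> closes_half_full s s' Q \<and>
    (\<forall>j. E \<le> j \<longrightarrow> cur s' j = 0)"
  proof (cases "z \<le> 1 / 2 ^ e")
    case True
    then have s': "s' = s1\<lparr>bins := (bins s)(i := Tiny e)\<rparr>"
      unfolding s'_def arrive_def s1_def e_def Let_def by simp
    have "sizes s' y \<le> 1 / 2 ^ e" if "y \<in> contents s' Q (Tiny e)" for y
    proof (cases "y = i")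
      case False
      with that have "placed_ok E s y" "bins s y = Tiny e"
        using ok unfolding Q_def packing_ok_def contents_def by (auto simp: s')
      then show ?thesis using False by (simp add: placed_ok_def s' s1_def)
    qed (use True in \<open>simp add: s' s1_def\<close>)
    then have "load s' Q (Tiny e) \<le> 1"
      using fin le_two_power_ceillog2[of "card Q"] unfolding e_def
      by (intro load_le_one_if_small) auto
    moreover have "placed_ok E s' i"
      using z True E[folded e_def] by (simp add: placed_ok_def s' s1_def)
    moreover have "i \<in> Q" unfolding Q_def by simp
    ultimately have "packing_ok E Q s'"
      by (intro packing_ok_fun_upd[OF ok1]) (simp_all add: s' s1_def)
    then show ?thesis using cur i by (simp add: s' s1_def closes_half_full_def)
  next
    case False
    define j where "j = size_class z"
    have s': "s' = place Q i s1"
      using False unfolding s'_def arrive_def s1_def e_def Let_def by simp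
    have "0 < z" by (rule less_trans[OF _ False[unfolded not_le]]) simp
    moreover have "j < E" using size_class_less[of e z] False z E unfolding j_def e_def by simp
    moreover have "sizes s1 i = z" "i \<in> Q" by (simp_all add: s1_def Q_def)
    ultimately have "packing_ok E Q s'" and "bins s' = (bins s1)(i := Class j (cur s' j))"
      and "sizes s' = sizes s1" and closes: "closes_half_full s1 s' Q"
      and "\<forall>j'. j' \<noteq> j \<longrightarrow> cur s' j' = cur s1 j'"
      using place_props[of E Q i s1] ok1 z(2) unfolding j_def s' by (simp_all add: s1_def)
    moreover have "closes_half_full s s' Q" using closes by (simp add: closes_half_full_def s1_def)
    moreover from this have "cur s j \<le> cur s' j" unfolding closes_half_full_def by (simp add: le_fun_def)
    ultimately show ?thesis using cur i \<open>j < E\<close> by (auto simp: s1_def)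
  qed
  then show "packing_ok E Q s'" and "\<forall>x\<in>P. bins s' x = bins s x" and "sizes s' = (sizes s)(i := z)"
    and "\<forall>j k. bins s' i = Class j k \<longrightarrow> cur s j \<le> k" and "closes_half_full s s' Q"
    and "\<forall>j. E \<le> j \<longrightarrow> cur s' j = 0"
    by blast+
qed

lemma arrive_step:
  assumes inv: "alg_invariant \<alpha> E P s" and i: "i \<notin> P" and z: "0 \<le> z" "z \<le> 1"
    and E: "ceillog2 (card (insert i P)) \<le> E" and \<alpha>: "\<alpha> \<le> 1/2"
  shows "alg_invariant \<alpha> E (insert i P) (arrive (insert i P) i z s)"
    and "potential \<beta> (arrive (insert i P) i z s) (insert i P) = potential \<beta> s P"
proof -
  define Q where "Q = insert i P"
  define s' where "s' = arrive Q i z s"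
  have ok: "packing_ok E P s" and cur: "\<forall>j. E \<le> j \<longrightarrow> cur s j = 0"
    using inv unfolding alg_invariant_def by blast+
  note A = arrive_props[OF ok cur i z E, folded Q_def, folded s'_def]
  have old: "contents s' Q (Class j k) = contents s P (Class j k)" if "k < cur s j" for j k
    using A(2,4) that i unfolding contents_def Q_def by (auto simp: not_le[symmetric])
  have sizes: "\<forall>x\<in>P. sizes s' x = sizes s x" using A(3) i by auto
  have old_load: "load s' Q (Class j k) = load s P (Class j k)" if "k < cur s j" for j k
    using old[OF that] sizes by (intro load_cong) (auto simp: contents_def)
  have "\<alpha> \<le> load s' Q (Class j k)"
    if "k < cur s' j" "contents s' Q (Class j k) \<noteq> {}" for j k
  proof (cases "k < cur s j")
    case True
    then show ?thesis using inv that old[OF True] old_load[OF True] unfolding alg_invariant_def by auto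
  next
    case False
    then have "1/2 \<le> load s' Q (Class j k)"
      using A(5) that unfolding closes_half_full_def by (simp add: not_less)
    then show ?thesis using \<alpha> by linarith
  qed
  then show "alg_invariant \<alpha> E (insert i P) (arrive (insert i P) i z s)"
    unfolding alg_invariant_def Q_def[symmetric] s'_def[symmetric] using A(1,6) by blast
  have "potential \<beta> s' Q = (\<Sum>(j, k)\<in>closed_bins s. bin_potential \<beta> s' Q j k)"
    using A(5,6) finite_closed_bins by (blast intro: potential_eq_sum_old_closed)
  also have "\<dots> = potential \<beta> s P"
    unfolding potential_def using old sizes
    by (intro sum.cong) (auto simp: closed_bins_def contents_def intro!: bin_potential_cong)
  finally show "potential \<beta> (arrive (insert i P) i z s) (insert i P) = potential \<beta> s P"
    unfolding Q_def s'_def .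
qed

definition underfull :: "real \<Rightarrow> nat set \<Rightarrow> state \<Rightarrow> bin \<Rightarrow> bool" where
  "underfull \<alpha> Q s b \<longleftrightarrow> (case b of Tiny e \<Rightarrow> False | Class j k \<Rightarrow> k < cur s j \<and> load s Q b < \<alpha>)"

definition depart :: "real \<Rightarrow> nat set \<Rightarrow> nat \<Rightarrow> state \<Rightarrow> state list" where
  "depart \<alpha> Q i s = (if underfull \<alpha> Q s (bins s i)
     then s # place_all Q (sorted_list_of_set (contents s Q (bins s i))) s else [s])"

lemma depart_keep:
  assumes inv: "alg_invariant \<alpha> E P s" and i: "i \<in> P"
    and keep: "\<not> underfull \<alpha> (P - {i}) s (bins s i)"
  shows "alg_invariant \<alpha> E (P - {i}) s"
proof -
  have "\<alpha> \<le> load s (P - {i}) (Class j k)"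
    if "k < cur s j" "contents s (P - {i}) (Class j k) \<noteq> {}" for j k
  proof (cases "bins s i = Class j k")
    case True
    then show ?thesis using keep that by (simp add: underfull_def)
  next
    case False
    then have "contents s (P - {i}) (Class j k) = contents s P (Class j k)"
      unfolding contents_def by auto
    then show ?thesis using inv that unfolding alg_invariant_def load_def by auto
  qed
  then show ?thesis
    using inv packing_ok_subset[of E P s "P - {i}"] unfolding alg_invariant_def by blast
qed

lemma repack_props:
  fixes Q s j k0
  defines "ts \<equiv> place_all Q (sorted_list_of_set (contents s Q (Class j k0))) s"
  defines "s' \<equiv> last (s # ts)"
  assumes ok: "packing_ok E Q s" and k0: "k0 < cur s j"
  shows "\<forall>t\<in>set ts. packing_ok E Q t \<and> sizes t = sizes s"
    and "successively (\<lambda>t u. \<exists>y v. bins u = (bins t)(y := v)) (s # ts)"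
    and "contents s' Q (Class j k0) = {}"
    and "\<forall>j' k'. k' < cur s j' \<longrightarrow> (j', k') \<noteq> (j, k0) \<longrightarrow>
           contents s' Q (Class j' k') = contents s Q (Class j' k')"
    and "closes_half_full s s' Q"
    and "\<forall>j'. j' \<noteq> j \<longrightarrow> cur s' j' = cur s j'"
    and "length ts = card (contents s Q (Class j k0))"
proof -
  let ?S = "contents s Q (Class j k0)"
  have "finite ?S" using ok unfolding packing_ok_def contents_def by simp
  then have xs: "distinct (sorted_list_of_set ?S)" "set (sorted_list_of_set ?S) = ?S" by simp_all
  have "set (sorted_list_of_set ?S) \<subseteq> Q" "\<forall>x\<in>set (sorted_list_of_set ?S). bins s x = Class j k0"
    using xs(2) unfolding contents_def by auto
  note R = place_all_props[OF ok xs(1) this k0, folded ts_def s'_def, unfolded xs(2)]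
  then show "\<forall>t\<in>set ts. packing_ok E Q t \<and> sizes t = sizes s"
    and "successively (\<lambda>t u. \<exists>y v. bins u = (bins t)(y := v)) (s # ts)"
    and "closes_half_full s s' Q" and "\<forall>j'. j' \<noteq> j \<longrightarrow> cur s' j' = cur s j'"
    and "length ts = card ?S"
    using distinct_card[OF xs(1)] xs(2) by auto
  have moved: "\<exists>k. bins s' x = Class j k \<and> cur s j \<le> k" if "x \<in> ?S" for x
    using R that by blast
  have kept: "bins s' x = bins s x" if "x \<notin> ?S" for x
    using R that by blast
  show "contents s' Q (Class j k0) = {}"
    using moved kept k0 unfolding contents_def by fastforce
  have "bins s' x = Class j' k' \<longleftrightarrow> bins s x = Class j' k'"
    if "k' < cur s j'" "(j', k') \<noteq> (j, k0)" "x \<in> Q" for j' k' x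
    using moved kept that unfolding contents_def by (cases "bins s x = Class j k0") fastforce+
  then show "\<forall>j' k'. k' < cur s j' \<longrightarrow> (j', k') \<noteq> (j, k0) \<longrightarrow>
      contents s' Q (Class j' k') = contents s Q (Class j' k')"
    unfolding contents_def by blast
qed

text \<open>Emptying an underfull bin releases its potential, which pays for the migrations.\<close>
lemma repack_step:
  fixes P i s
  defines "Q \<equiv> P - {i}"
  defines "ts \<equiv> place_all Q (sorted_list_of_set (contents s Q (bins s i))) s"
  assumes inv: "alg_invariant \<alpha> E P s" and i: "i \<in> P" and under: "underfull \<alpha> Q s (bins s i)"
    and \<alpha>: "\<alpha> \<le> 1/2" and \<beta>: "0 \<le> \<beta>" and \<alpha>\<beta>: "2 * \<alpha> \<le> \<beta> * (1/2 - \<alpha>)"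
  shows "\<forall>t\<in>set ts. packing_ok E Q t \<and> sizes t = sizes s"
    and "successively (\<lambda>t u. \<exists>y v. bins u = (bins t)(y := v)) (s # ts)"
    and "alg_invariant \<alpha> E Q (last (s # ts))"
    and "real (length ts) + potential \<beta> (last (s # ts)) Q \<le> potential \<beta> s Q"
proof -
  define s' where "s' = last (s # ts)"
  obtain j k0 where b: "bins s i = Class j k0" and k0: "k0 < cur s j"
    and low: "load s Q (Class j k0) < \<alpha>"
    using under unfolding underfull_def by (auto split: bin.splits)
  have ok: "packing_ok E Q s" using inv packing_ok_subset unfolding alg_invariant_def Q_def by blast
  have cur: "\<forall>j. E \<le> j \<longrightarrow> cur s j = 0" using inv unfolding alg_invariant_def by blast
  have "placed_ok E s i" using inv i unfolding alg_invariant_def packing_ok_def by blast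
  then have jE: "j < E" using b by (simp add: placed_ok_Class)
  have ts: "ts = place_all Q (sorted_list_of_set (contents s Q (Class j k0))) s"
    unfolding ts_def b ..
  note R = repack_props[OF ok k0, folded ts, folded s'_def]
  then show "\<forall>t\<in>set ts. packing_ok E Q t \<and> sizes t = sizes s"
    and "successively (\<lambda>t u. \<exists>y v. bins u = (bins t)(y := v)) (s # ts)" by blast+
  have "s' = s \<or> s' \<in> set ts" unfolding s'_def by (cases ts) auto
  then have ok': "packing_ok E Q s'" and sizes': "sizes s' = sizes s"
    using R(1) ok by auto
  have cur': "\<forall>j'. E \<le> j' \<longrightarrow> cur s' j' = 0" using R(6) cur jE by auto
  have old: "contents s' Q (Class j' k') = contents s P (Class j' k')"
    if "k' < cur s j'" "(j', k') \<noteq> (j, k0)" for j' k'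
    using R(4) that b unfolding Q_def contents_def by auto
  have "\<alpha> \<le> load s' Q (Class j' k')"
    if "k' < cur s' j'" "contents s' Q (Class j' k') \<noteq> {}" for j' k'
  proof (cases "k' < cur s j'")
    case True
    with that R(3) have "(j', k') \<noteq> (j, k0)" by auto
    with True have "contents s' Q (Class j' k') = contents s P (Class j' k')" by (rule old)
    moreover from this have "load s' Q (Class j' k') = load s P (Class j' k')"
      using sizes' by (intro load_cong) auto
    ultimately show ?thesis using inv True that unfolding alg_invariant_def by auto
  next
    case False
    then have "1/2 \<le> load s' Q (Class j' k')"
      using R(5) that unfolding closes_half_full_def by (simp add: not_less)
    then show ?thesis using \<alpha> by linarith
  qed
  then show "alg_invariant \<alpha> E Q (last (s # ts))"
    unfolding alg_invariant_def s'_def[symmetric] using ok' cur' by blast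
  have "potential \<beta> s' Q = potential \<beta> s Q - bin_potential \<beta> s Q j k0"
    using finite_closed_bins[OF cur] finite_closed_bins[OF cur'] k0 R(3,4,5) sizes'
    by (intro potential_emptied_bin) (auto simp: closed_bins_def)
  moreover have "real (length ts) \<le> bin_potential \<beta> s Q j k0"
    using R(7) card_contents_le_bin_potential[OF ok low \<beta> \<alpha>\<beta>] by simp
  ultimately show "real (length ts) + potential \<beta> (last (s # ts)) Q \<le> potential \<beta> s Q"
    unfolding s'_def by simp
qed

lemma depart_step:
  fixes \<alpha> P i s
  defines "out \<equiv> depart \<alpha> (P - {i}) i s"
  assumes inv: "alg_invariant \<alpha> E P s" and i: "i \<in> P"
    and \<alpha>: "\<alpha> \<le> 1/2" and \<beta>: "0 \<le> \<beta>" and \<alpha>\<beta>: "2 * \<alpha> \<le> \<beta> * (1/2 - \<alpha>)"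
  shows "out \<noteq> []" and "hd out = s"
    and "\<forall>t\<in>set out. packing_ok E (P - {i}) t \<and> sizes t = sizes s"
    and "successively (\<lambda>t u. \<exists>y v. bins u = (bins t)(y := v)) out"
    and "alg_invariant \<alpha> E (P - {i}) (last out)"
    and "real (length out - 1) + potential \<beta> (last out) (P - {i}) \<le> potential \<beta> s P + \<beta>"
proof -
  have ok: "packing_ok E (P - {i}) s" using inv packing_ok_subset unfolding alg_invariant_def by blast
  have pot: "potential \<beta> s (P - {i}) \<le> potential \<beta> s P + \<beta>" using potential_remove[OF inv i \<beta>] .
  show "out \<noteq> []" and "hd out = s" unfolding out_def depart_def by simp_all
  have "(\<forall>t\<in>set out. packing_ok E (P - {i}) t \<and> sizes t = sizes s) \<and>
    successively (\<lambda>t u. \<exists>y v. bins u = (bins t)(y := v)) out \<and>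
    alg_invariant \<alpha> E (P - {i}) (last out) \<and>
    real (length out - 1) + potential \<beta> (last out) (P - {i}) \<le> potential \<beta> s P + \<beta>"
  proof (cases "underfull \<alpha> (P - {i}) s (bins s i)")
    case True
    then show ?thesis
      using repack_step[OF inv i True \<alpha> \<beta> \<alpha>\<beta>] ok pot unfolding out_def depart_def by auto
  next
    case False
    then show ?thesis
      using depart_keep[OF inv i False] ok pot unfolding out_def depart_def by simp
  qed
  then show "\<forall>t\<in>set out. packing_ok E (P - {i}) t \<and> sizes t = sizes s"
    and "successively (\<lambda>t u. \<exists>y v. bins u = (bins t)(y := v)) out"
    and "alg_invariant \<alpha> E (P - {i}) (last out)"
    and "real (length out - 1) + potential \<beta> (last out) (P - {i}) \<le> potential \<beta> s P + \<beta>"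
    by blast+
qed

definition step :: "real \<Rightarrow> nat set \<Rightarrow> state \<Rightarrow> event \<Rightarrow> state list" where
  "step \<alpha> Q s e = (case e of Arr t i z \<Rightarrow> [arrive Q i z s] | Dep t i \<Rightarrow> depart \<alpha> Q i s)"

definition init_state :: state where
  "init_state = \<lparr>bins = (\<lambda>_. Tiny 0), cur = (\<lambda>_. 0), sizes = (\<lambda>_. 0)\<rparr>"

fun run_rev :: "real \<Rightarrow> event list \<Rightarrow> state" where
  "run_rev \<alpha> [] = init_state"
| "run_rev \<alpha> (e # r) = last (step \<alpha> (present (rev (e # r))) (run_rev \<alpha> r) e)"

definition state_after :: "real \<Rightarrow> event list \<Rightarrow> state" where
  "state_after \<alpha> h = run_rev \<alpha> (rev h)"

definition online_alg :: "real \<Rightarrow> algorithm" where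
  "online_alg \<alpha> h = (case rev h of [] \<Rightarrow> []
     | e # r \<Rightarrow> map (\<lambda>t. to_nat \<circ> bins t) (step \<alpha> (present h) (run_rev \<alpha> r) e))"

definition response :: "real \<Rightarrow> item list \<Rightarrow> nat \<Rightarrow> state list" where
  "response \<alpha> I k = step \<alpha> (present (take (Suc k) (events I)))
     (state_after \<alpha> (take k (events I))) (events I ! k)"

lemma state_after_take_Suc:
  "k < length (events I) \<Longrightarrow> state_after \<alpha> (take (Suc k) (events I)) = last (response \<alpha> I k)"
  unfolding state_after_def response_def by (simp add: take_Suc_conv_app_nth)

lemma online_alg_take_Suc:
  "k < length (events I) \<Longrightarrow>
   online_alg \<alpha> (take (Suc k) (events I)) = map (\<lambda>t. to_nat \<circ> bins t) (response \<alpha> I k)"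
  unfolding online_alg_def response_def state_after_def by (simp add: take_Suc_conv_app_nth)

lemma step_ne_Nil: "step \<alpha> Q s e \<noteq> []"
  unfolding step_def depart_def by (simp split: event.splits)

lemma response_step:
  fixes I k \<alpha> \<beta>
  defines "P \<equiv> present (take k (events I))" and "Q \<equiv> present (take (Suc k) (events I))"
    and "s \<equiv> state_after \<alpha> (take k (events I))" and "E \<equiv> ceillog2 (rho I)"
  assumes wf: "well_formed I" and k: "k < length (events I)"
    and \<alpha>: "\<alpha> \<le> 1/2" and \<beta>: "0 \<le> \<beta>" and \<alpha>\<beta>: "2 * \<alpha> \<le> \<beta> * (1/2 - \<alpha>)"
    and inv: "alg_invariant \<alpha> E P s" and sizes: "\<forall>i\<in>P. sizes s i = isize (I!i)"
  shows "\<forall>x\<in>P \<inter> Q. bins (hd (response \<alpha> I k)) x = bins s x"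
    and "\<forall>t\<in>set (response \<alpha> I k). packing_ok E Q t \<and> (\<forall>i\<in>Q. sizes t i = isize (I!i))"
    and "successively (\<lambda>t u. \<exists>y v. bins u = (bins t)(y := v)) (response \<alpha> I k)"
    and "alg_invariant \<alpha> E Q (last (response \<alpha> I k))"
    and "real (length (response \<alpha> I k) - 1) + potential \<beta> (last (response \<alpha> I k)) Q
           \<le> potential \<beta> s P + (if is_departure (events I ! k) then \<beta> else 0)"
proof -
  have "(\<forall>x\<in>P \<inter> Q. bins (hd (response \<alpha> I k)) x = bins s x) \<and>
    (\<forall>t\<in>set (response \<alpha> I k). packing_ok E Q t \<and> (\<forall>i\<in>Q. sizes t i = isize (I!i))) \<and>
    successively (\<lambda>t u. \<exists>y v. bins u = (bins t)(y := v)) (response \<alpha> I k) \<and>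
    alg_invariant \<alpha> E Q (last (response \<alpha> I k)) \<and>
    real (length (response \<alpha> I k) - 1) + potential \<beta> (last (response \<alpha> I k)) Q
      \<le> potential \<beta> s P + (if is_departure (events I ! k) then \<beta> else 0)"
  proof (cases "events I ! k")
    case (Arr t i z)
    note ev = present_take_Suc_Arr[OF wf k Arr, folded P_def Q_def]
    have "card Q \<le> rho I"
      using card_mono[OF _ ev(5)] card_present_at_le_rho[of I t] unfolding present_at_def by simp
    then have E: "ceillog2 (card (insert i P)) \<le> E"
      unfolding E_def ev(4)[symmetric] by (rule ceillog2_mono)
    have z: "0 \<le> z" "z \<le> 1" using wf ev(1,2) unfolding well_formed_def by auto
    have out: "response \<alpha> I k = [arrive Q i z s]"
      unfolding response_def Arr step_def P_def Q_def s_def by simp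
    have ok: "packing_ok E P s" and cur: "\<forall>j. E \<le> j \<longrightarrow> cur s j = 0"
      using inv unfolding alg_invariant_def by blast+
    note A = arrive_props[OF ok cur ev(3) z E] arrive_step(1)[OF inv ev(3) z E \<alpha>]
      arrive_step(2)[OF inv ev(3) z E \<alpha>, where \<beta> = \<beta>]
    show ?thesis
      using A(7,8) sizes ev A(2,3) Arr unfolding out alg_invariant_def by auto
  next
    case (Dep t i)
    note ev = present_take_Suc_Dep[OF wf k Dep, folded P_def Q_def]
    have "response \<alpha> I k = depart \<alpha> Q i s"
      unfolding response_def Dep step_def Q_def s_def by simp
    then have out: "response \<alpha> I k = depart \<alpha> (P - {i}) i s" unfolding ev(2) .
    note D = depart_step[OF inv ev(1) \<alpha> \<beta> \<alpha>\<beta>, folded out ev(2)]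
    show ?thesis using D sizes Dep unfolding ev(2) by auto
  qed
  then show "\<forall>x\<in>P \<inter> Q. bins (hd (response \<alpha> I k)) x = bins s x"
    and "\<forall>t\<in>set (response \<alpha> I k). packing_ok E Q t \<and> (\<forall>i\<in>Q. sizes t i = isize (I!i))"
    and "successively (\<lambda>t u. \<exists>y v. bins u = (bins t)(y := v)) (response \<alpha> I k)"
    and "alg_invariant \<alpha> E Q (last (response \<alpha> I k))"
    and "real (length (response \<alpha> I k) - 1) + potential \<beta> (last (response \<alpha> I k)) Q
           \<le> potential \<beta> s P + (if is_departure (events I ! k) then \<beta> else 0)"
    by blast+
qed

lemma run_invariant:
  assumes wf: "well_formed I" and k: "k \<le> length (events I)"
    and \<alpha>: "\<alpha> \<le> 1/2" and \<beta>: "0 \<le> \<beta>" and \<alpha>\<beta>: "2 * \<alpha> \<le> \<beta> * (1/2 - \<alpha>)"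
  shows "alg_invariant \<alpha> (ceillog2 (rho I)) (present (take k (events I)))
      (state_after \<alpha> (take k (events I))) \<and>
    (\<forall>i\<in>present (take k (events I)). sizes (state_after \<alpha> (take k (events I))) i = isize (I!i)) \<and>
    real (\<Sum>k'<k. length (response \<alpha> I k') - 1) +
      potential \<beta> (state_after \<alpha> (take k (events I))) (present (take k (events I)))
      \<le> \<beta> * real (length (filter is_departure (take k (events I))))"
  using k
proof (induction k)
  case 0
  have "alg_invariant \<alpha> E {} init_state" for E
    unfolding alg_invariant_def packing_ok_def init_state_def load_def contents_def by simp
  moreover have "potential \<beta> init_state {} = 0"
    unfolding potential_def closed_bins_def init_state_def by simp
  ultimately show ?case by (simp add: state_after_def present_def)
next
  case (Suc k)
  then have k: "k < length (events I)" by simp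
  have IH: "alg_invariant \<alpha> (ceillog2 (rho I)) (present (take k (events I)))
      (state_after \<alpha> (take k (events I)))"
    "\<forall>i\<in>present (take k (events I)). sizes (state_after \<alpha> (take k (events I))) i = isize (I!i)"
    using Suc by simp_all
  note R = response_step[OF wf k \<alpha> \<beta> \<alpha>\<beta> IH]
  have "last (response \<alpha> I k) \<in> set (response \<alpha> I k)"
    unfolding response_def by (rule last_in_set[OF step_ne_Nil])
  then have "\<forall>i\<in>present (take (Suc k) (events I)). sizes (last (response \<alpha> I k)) i = isize (I!i)"
    using R(2) by blast
  moreover have "length (filter is_departure (take (Suc k) (events I))) =
      length (filter is_departure (take k (events I))) + (if is_departure (events I ! k) then 1 else 0)"
    using k by (simp add: take_Suc_conv_app_nth)
  ultimately show ?case
    using Suc R(4,5) unfolding state_after_take_Suc[OF k] by (auto simp: algebra_simps)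
qed

lemma ceillog2_le_ln: "real (2 * ceillog2 r + 1) \<le> 7 * max 1 (ln (real r))"
proof (cases "r = 0")
  case False
  have "1/2 \<le> ln (2::real)"
    using ln_le_minus_one[of "1/2::real"] by (simp add: ln_div)
  moreover have "0 \<le> ln (real r)" using False by simp
  ultimately have "log 2 (real r) \<le> ln (real r) / (1/2)"
    unfolding log_def by (intro divide_left_mono) auto
  then have "real (ceillog2 r) \<le> 2 * ln (real r) + 1"
    using ceillog2_less_log[of r] False by simp
  then show ?thesis by simp
qed simp

lemma feasible_to_nat_bins:
  assumes ok: "packing_ok E Q t" and sizes: "\<forall>i\<in>Q. sizes t i = isize (I!i)"
  shows "feasible I Q (to_nat \<circ> bins t)"
  unfolding feasible_def
proof
  fix m
  have "{i\<in>Q. (to_nat \<circ> bins t) i = m} \<subseteq> contents t Q (from_nat m)"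
    unfolding contents_def by auto
  then have "(\<Sum>i\<in>{i\<in>Q. (to_nat \<circ> bins t) i = m}. isize (I!i)) \<le> load t Q (from_nat m)"
    using ok sizes packing_ok_nonneg[OF ok] unfolding load_def packing_ok_def contents_def
    by (intro order_trans[OF eq_refl sum_mono2]) auto
  also have "\<dots> \<le> 1" using ok unfolding packing_ok_def by blast
  finally show "(\<Sum>i\<in>{i\<in>Q. (to_nat \<circ> bins t) i = m}. isize (I!i)) \<le> 1" .
qed

lemma card_moved_fun_upd_le:
  assumes "bins u = (bins t)(y := v)"
  shows "card (moved I (k, to_nat \<circ> bins t) (k', to_nat \<circ> bins u)) \<le> 1"
proof -
  have "moved I (k, to_nat \<circ> bins t) (k', to_nat \<circ> bins u) \<subseteq> {y}"
    using assms unfolding moved_def by auto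
  then show ?thesis using card_mono[of "{y}"] by fastforce
qed

lemma migration_factor_bounds:
  fixes \<alpha> :: real
  assumes "0 < \<alpha>" "\<alpha> < 1/2"
  shows "0 \<le> 4 * \<alpha> / (1 - 2 * \<alpha>)" and "2 * \<alpha> \<le> 4 * \<alpha> / (1 - 2 * \<alpha>) * (1/2 - \<alpha>)"
proof -
  have "0 < 1 - 2 * \<alpha>" using assms by simp
  then show "0 \<le> 4 * \<alpha> / (1 - 2 * \<alpha>)" using assms by simp
  from \<open>0 < 1 - 2 * \<alpha>\<close> have "4 * \<alpha> / (1 - 2 * \<alpha>) * (1/2 - \<alpha>) = 2 * \<alpha>"
    by (simp add: field_simps)
  then show "2 * \<alpha> \<le> 4 * \<alpha> / (1 - 2 * \<alpha>) * (1/2 - \<alpha>)" by simp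
qed

context
  fixes I :: "item list" and \<alpha> :: real
  assumes wf: "well_formed I" and \<alpha>: "0 < \<alpha>" "\<alpha> < 1/2"
begin

lemma response_props:
  assumes k: "k < length (events I)"
  shows "\<forall>t\<in>set (response \<alpha> I k). feasible I (present (take (Suc k) (events I))) (to_nat \<circ> bins t)"
    and "successively (\<lambda>t u. \<exists>y v. bins u = (bins t)(y := v)) (response \<alpha> I k)"
    and "\<forall>x\<in>present (take k (events I)) \<inter> present (take (Suc k) (events I)).
           bins (hd (response \<alpha> I k)) x = bins (state_after \<alpha> (take k (events I))) x"
proof -
  have \<alpha>': "\<alpha> \<le> 1/2" using \<alpha> by simp
  note inv = run_invariant[OF wf less_imp_le[OF k] \<alpha>' migration_factor_bounds[OF \<alpha>]]
  note R = response_step[OF wf k \<alpha>' migration_factor_bounds[OF \<alpha>]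
      conjunct1[OF inv] conjunct1[OF conjunct2[OF inv]]]
  show "\<forall>t\<in>set (response \<alpha> I k). feasible I (present (take (Suc k) (events I))) (to_nat \<circ> bins t)"
    using R(2) feasible_to_nat_bins by blast
  show "successively (\<lambda>t u. \<exists>y v. bins u = (bins t)(y := v)) (response \<alpha> I k)"
    and "\<forall>x\<in>present (take k (events I)) \<inter> present (take (Suc k) (events I)).
           bins (hd (response \<alpha> I k)) x = bins (state_after \<alpha> (take k (events I))) x"
    using R(1,3) by simp_all
qed

lemma online_alg_block:
  "k \<in> {1..length (events I)} \<Longrightarrow>
   online_alg \<alpha> (take k (events I)) = map (\<lambda>t. to_nat \<circ> bins t) (response \<alpha> I (k - 1))"
  by (cases k) (auto simp: online_alg_take_Suc)

lemma trace_online_alg: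
  "trace (online_alg \<alpha>) I = blocks (\<lambda>k. online_alg \<alpha> (take k (events I))) (length (events I))"
  unfolding trace_def blocks_def by (simp add: comp_def)

lemma last_online_alg:
  "k \<in> {1..length (events I)} \<Longrightarrow>
   last (online_alg \<alpha> (take k (events I))) = to_nat \<circ> bins (state_after \<alpha> (take k (events I)))"
  using step_ne_Nil
  by (cases k) (auto simp: online_alg_take_Suc state_after_take_Suc last_map response_def)

lemma card_moved_within_block:
  assumes k: "k \<in> {1..length (events I)}"
  shows "successively (\<lambda>a b. card (moved I (k, a) (k, b)) \<le> 1) (online_alg \<alpha> (take k (events I)))"
proof -
  have "successively (\<lambda>t u. \<exists>y v. bins u = (bins t)(y := v)) (response \<alpha> I (k - 1))"
    using k by (intro response_props(2)) auto
  then have "successively (\<lambda>t u. card (moved I (k, to_nat \<circ> bins t) (k, to_nat \<circ> bins u)) \<le> 1)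
      (response \<alpha> I (k - 1))"
    by (rule successively_mono) (metis card_moved_fun_upd_le)
  then show ?thesis using online_alg_block[OF k] by (simp add: successively_map)
qed

lemma moved_between_blocks:
  "1 \<le> k \<Longrightarrow> k < length (events I) \<Longrightarrow>
   moved I (k, last (online_alg \<alpha> (take k (events I))))
     (Suc k, hd (online_alg \<alpha> (take (Suc k) (events I)))) = {}"
  using response_props(3) last_online_alg online_alg_block step_ne_Nil
  unfolding moved_def response_def by (auto simp: hd_map)

lemma valid_run_online_alg: "valid_run (online_alg \<alpha>) I"
proof -
  let ?B = "\<lambda>k. online_alg \<alpha> (take k (events I))" and ?N = "length (events I)"
  have ne: "\<forall>k\<in>{1..?N}. ?B k \<noteq> []"
    using online_alg_block step_ne_Nil unfolding response_def by simp
  have "successively (\<lambda>x y. if fst x = fst y then card (moved I x y) \<le> 1 else moved I x y = {})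
    (blocks ?B ?N)"
  proof (rule successively_blocks[OF ne])
    show "\<forall>k\<in>{1..?N}. successively (\<lambda>a b. if fst (k, a) = fst (k, b)
        then card (moved I (k, a) (k, b)) \<le> 1 else moved I (k, a) (k, b) = {}) (?B k)"
      using card_moved_within_block by simp
    show "\<forall>k. 1 \<le> k \<longrightarrow> k < ?N \<longrightarrow> (if fst (k, last (?B k)) = fst (Suc k, hd (?B (Suc k)))
        then card (moved I (k, last (?B k)) (Suc k, hd (?B (Suc k)))) \<le> 1
        else moved I (k, last (?B k)) (Suc k, hd (?B (Suc k))) = {})"
      using moved_between_blocks by simp
  qed
  moreover have "feasible I (present (take (fst x) (events I))) (snd x)"
    if x_in: "x \<in> set (blocks ?B ?N)" for x
  proof -
    obtain k c where x: "x = (k, c)" and k: "k \<in> {1..?N}" and c: "c \<in> set (?B k)"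
      using set_blocks[OF x_in] by (cases x) auto
    then obtain t where "t \<in> set (response \<alpha> I (k - 1))" "c = to_nat \<circ> bins t"
      using online_alg_block[OF k] by auto
    moreover have "Suc (k - 1) = k" "k - 1 < ?N" using k by auto
    ultimately show ?thesis using response_props(1)[of "k - 1"] x by force
  qed
  ultimately show ?thesis
    using ne unfolding valid_run_def trace_online_alg successively_conv_nth by auto
qed

lemma migrations_online_alg_le:
  "real (migrations (online_alg \<alpha>) I) \<le> 4 * \<alpha> / (1 - 2 * \<alpha>) * real (length I)"
proof -
  let ?B = "\<lambda>k. online_alg \<alpha> (take k (events I))" and ?N = "length (events I)"
  have "migrations (online_alg \<alpha>) I = sum_adjacent (\<lambda>x y. card (moved I x y)) (blocks ?B ?N)"
    unfolding migrations_def sum_adjacent_def trace_online_alg ..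
  also have "\<dots> \<le> (\<Sum>k=1..?N. length (?B k) - 1)"
  proof (rule sum_adjacent_blocks_le)
    show "\<forall>k\<in>{1..?N}. ?B k \<noteq> []"
      using online_alg_block step_ne_Nil unfolding response_def by simp
    show "\<forall>k\<in>{1..?N}. successively (\<lambda>a b. card (moved I (k, a) (k, b)) \<le> 1) (?B k)"
      using card_moved_within_block by blast
    show "\<forall>k. 1 \<le> k \<longrightarrow> k < ?N \<longrightarrow> card (moved I (k, last (?B k)) (Suc k, hd (?B (Suc k)))) = 0"
      using moved_between_blocks by simp
  qed
  also have "\<dots> = (\<Sum>k<?N. length (response \<alpha> I k) - 1)"
    by (simp add: sum.atLeast1_atMost_eq online_alg_take_Suc)
  finally have "real (migrations (online_alg \<alpha>) I) \<le> real (\<Sum>k<?N. length (response \<alpha> I k) - 1)"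
    by linarith
  also have "\<dots> \<le> 4 * \<alpha> / (1 - 2 * \<alpha>) * real (length (filter is_departure (events I)))"
  proof -
    have "\<alpha> \<le> 1/2" using \<alpha> by simp
    note run = run_invariant[OF wf order_refl this migration_factor_bounds[OF \<alpha>]]
    have "0 \<le> potential (4 * \<alpha> / (1 - 2 * \<alpha>)) (state_after \<alpha> (events I)) (present (events I))"
      by (rule potential_nonneg[OF migration_factor_bounds(1)[OF \<alpha>]])
    with run show ?thesis by simp
  qed
  finally show ?thesis unfolding length_filter_departures .
qed

lemma open_bins_online_alg_le:
  "real (open_bins_at (online_alg \<alpha>) I t)
     \<le> real (opt I (present_at I t)) / \<alpha> + 7 * max 1 (ln (real (rho I)))"
proof -
  obtain k where k: "k \<le> length (events I)" and hist: "hist_at I t = take k (events I)"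
    using hist_at_eq_take by blast
  show ?thesis
  proof (cases "k = 0")
    case True
    then have "open_bins_at (online_alg \<alpha>) I t = 0"
      unfolding open_bins_at_def hist present_def by simp
    then show ?thesis using \<alpha> by simp
  next
    case False
    define P where "P = present (take k (events I))"
    define s where "s = state_after \<alpha> (take k (events I))"
    have inv: "alg_invariant \<alpha> (ceillog2 (rho I)) P s"
      and sizes: "\<forall>i\<in>P. sizes s i = isize (I!i)"
      using run_invariant[OF wf k _ migration_factor_bounds[OF \<alpha>]] \<alpha> unfolding P_def s_def by auto
    have "last (online_alg \<alpha> (take k (events I))) = to_nat \<circ> bins s"
      using False k unfolding s_def by (intro last_online_alg) simp
    then have "open_bins_at (online_alg \<alpha>) I t = card (to_nat ` bins s ` P)"
      unfolding open_bins_at_def hist P_def by (simp add: image_comp)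
    also have "\<dots> = card (bins s ` P)" by (simp add: card_image)
    finally have "real (open_bins_at (online_alg \<alpha>) I t)
        \<le> (\<Sum>i\<in>P. isize (I!i)) / \<alpha> + real (2 * ceillog2 (rho I) + 1)"
      using card_bins_le[OF inv \<alpha>(1)] sizes by simp
    moreover have "(\<Sum>i\<in>P. isize (I!i)) \<le> real (opt I (present_at I t))"
      using present_hist_at_subset[OF wf, of t] hist unfolding P_def
      by (intro sum_sizes_le_opt[OF wf]) (auto simp: present_at_def)
    then have "(\<Sum>i\<in>P. isize (I!i)) / \<alpha> \<le> real (opt I (present_at I t)) / \<alpha>"
      using \<alpha> by (simp add: divide_right_mono)
    ultimately show ?thesis using ceillog2_le_ln[of "rho I"] by linarith
  qed
qed

end

theorem theorem2:
  "\<exists>C::real. \<forall>\<alpha>::real. 0 < \<alpha> \<and> \<alpha> < 1/2 \<longrightarrow>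
     (\<exists>A::algorithm. \<forall>I. well_formed I \<longrightarrow>
        valid_run A I \<and>
        real (migrations A I) \<le> 4 * \<alpha> / (1 - 2 * \<alpha>) * real (length I) \<and>
        (\<forall>t. real (open_bins_at A I t)
               \<le> real (opt I (present_at I t)) / \<alpha> + C * max 1 (ln (real (rho I)))))"
proof (intro exI[of _ 7] allI impI)
  fix \<alpha> :: real
  assume "0 < \<alpha> \<and> \<alpha> < 1/2"
  then show "\<exists>A::algorithm. \<forall>I. well_formed I \<longrightarrow>
        valid_run A I \<and>
        real (migrations A I) \<le> 4 * \<alpha> / (1 - 2 * \<alpha>) * real (length I) \<and>
        (\<forall>t. real (open_bins_at A I t)
               \<le> real (opt I (present_at I t)) / \<alpha> + 7 * max 1 (ln (real (rho I))))"
    using valid_run_online_alg migrations_online_alg_le open_bins_online_alg_le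
    by (intro exI[of _ "online_alg \<alpha>"]) blast
qed

end
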